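(* Let $(\mathcal F_d)_{d}$ be a family of base classes $\mathcal F_d\subseteq\{0,1\}^{\{0,1\}^*}$. If $\mathrm{Cons}_{\mathcal F_d}$ can be implemented in time polynomial in the length of its input and in $d$, and $\mathrm{VCdim}(\mathcal F_d)$ is bounded by a polynomial in $d$, then $\mathcal F_d^{\mathrm{e2e}(T)}$ is CoT-learnable in time $\mathrm{poly}(n,d,T,1/\epsilon,\log(1/\delta))$.
   Context: Alphabet $\Sigma=\{0,1\}$. For $f:\Sigma^*\to\Sigma$, $\bar f(\mathbf x)$ is $\mathbf x$ with $f(\mathbf x)$ appended; $f^{\mathrm{CoT}(T)}=\bar f\circ\cdots\circ\bar f$ ($T$ times); $f^{\mathrm{e2e}(T)}(\mathbf x)$ is the last token of $f^{\mathrm{CoT}(T)}(\mathbf x)$; $\mathcal F^{\mathrm{e2e}(T)}=\{f^{\mathrm{e2e}(T)}:f\in\mathcal F\}$. $\mathrm{Cons}_{\mathcal F}$: given pairs $(\mathbf u_i,v_i)$, return some $\hat f\in\mathcal F$ with $\hat f(\mathbf u_i)=v_i$ for all $i$. CoT-learnability over a domain $\mathcal X$: there is a rule $A$ such that for every distribution $\mathcal D$ over $\mathcal X$, every $f_*\in\mathcal F_d$ and all $\epsilon,\delta\in(0,1)$, with probability $\ge1-\delta$ over $\mathbf x_1,\dots,\mathbf x_m$ i.i.d. $\mathcal D$, given $S_{\mathrm{CoT}}=(f_*^{\mathrm{CoT}(T)}(\mathbf x_i))_{i\le m}$ the output $h=A(S_{\mathrm{CoT}})$ satisfies $\Pr_{\mathbf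 x\sim\mathcal D}[h(\mathbf x)\ne f_*^{\mathrm{e2e}(T)}(\mathbf x)]\le\epsilon$. "CoT-learnable in time $\mathrm{time}(n,d,T,\epsilon,\delta)$" means there is such a rule $A$ (given $d,T$) which, over the domain $\mathcal X=\Sigma^{\le n}$ (prompts of length at most $n$), runs in time at most $\mathrm{time}(n,d,T,\epsilon,\delta)$ almost surely, for all $n,d,T,\epsilon,\delta$. *)

theory Defs
  imports "HOL-Probability.Probability" "HOL-Library.Extended_Nat"
begin

definition cot_step :: "(bool list \<Rightarrow> bool) \<Rightarrow> bool list \<Rightarrow> bool list" where
  "cot_step f x = x @ [f x]"

definition cot :: "(bool list \<Rightarrow> bool) \<Rightarrow> nat \<Rightarrow> bool list \<Rightarrow> bool list" where
  "cot f T = (cot_step f ^^ T)"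

definition e2e :: "(bool list \<Rightarrow> bool) \<Rightarrow> nat \<Rightarrow> bool list \<Rightarrow> bool" where
  "e2e f T x = last (cot f T x)"

definition shatters :: "('a \<Rightarrow> bool) set \<Rightarrow> 'a set \<Rightarrow> bool" where
  "shatters F S \<longleftrightarrow> (\<forall>g. \<exists>f\<in>F. \<forall>x\<in>S. f x = g x)"

definition vcdim :: "('a \<Rightarrow> bool) set \<Rightarrow> enat" where
  "vcdim F = Sup {enat (card S) | S. finite S \<and> shatters F S}"

text \<open>Tape symbols are naturals below the machine's alphabet size; 0 is blank,
  1 encodes the bit False (0) and 2 the bit True (1). States are naturals below
  the number of states; 0 is the start state, 1 the halting state.\<close>

datatype move = Left | Right | Stay

type_synonym tm = "nat \<times> nat \<times> (nat \<Rightarrow> nat \<Rightarrow> nat \<times> nat \<times> move)"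
type_synonym config = "nat \<times> (int \<Rightarrow> nat) \<times> int"

definition tm_wf :: "tm \<Rightarrow> bool" where
  "tm_wf M = (case M of (Q, S, \<delta>) \<Rightarrow>
     2 \<le> Q \<and> 3 \<le> S \<and> (\<forall>q<Q. \<forall>s<S. case \<delta> q s of (q', s', _) \<Rightarrow> q' < Q \<and> s' < S))"

fun move_delta :: "move \<Rightarrow> int" where
  "move_delta Left = -1" | "move_delta Right = 1" | "move_delta Stay = 0"

definition tm_step :: "tm \<Rightarrow> config \<Rightarrow> config" where
  "tm_step M c = (case M of (Q, S, \<delta>) \<Rightarrow> case c of (q, tp, p) \<Rightarrow>
     if q = 1 then c
     else (case \<delta> q (tp p) of (q', s', mv) \<Rightarrow> (q', tp(p := s'), p + move_delta mv)))"

definition sym_of_bit :: "bool \<Rightarrow> nat" where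
  "sym_of_bit b = (if b then 2 else 1)"

definition tm_init :: "bool list \<Rightarrow> config" where
  "tm_init x = (0, \<lambda>i. if 0 \<le> i \<and> i < int (length x) then sym_of_bit (x ! nat i) else 0, 0)"

definition tm_run :: "tm \<Rightarrow> nat \<Rightarrow> bool list \<Rightarrow> config" where
  "tm_run M t x = (tm_step M ^^ t) (tm_init x)"

definition tm_halts_within :: "tm \<Rightarrow> nat \<Rightarrow> bool list \<Rightarrow> bool" where
  "tm_halts_within M t x \<longleftrightarrow> fst (tm_run M t x) = 1"

definition tape_output :: "(int \<Rightarrow> nat) \<Rightarrow> bool list" where
  "tape_output tp = (let L = (LEAST k::nat. tp (int k) \<notin> {1, 2})
                     in map (\<lambda>i. tp (int i) = 2) [0..<L])"

definition tm_output :: "tm \<Rightarrow> nat \<Rightarrow> bool list \<Rightarrow> bool list" where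
  "tm_output M t x = tape_output (fst (snd (tm_run M t x)))"

definition enc_str :: "bool list \<Rightarrow> bool list" where
  "enc_str xs = concat (map (\<lambda>b. [True, b]) xs) @ [False, False]"

definition enc_nat :: "nat \<Rightarrow> bool list" where
  "enc_nat n = enc_str (replicate n True)"

definition enc_cons :: "nat \<Rightarrow> (bool list \<times> bool) list \<Rightarrow> bool list" where
  "enc_cons d ps = enc_nat d @ concat (map (\<lambda>(u, v). enc_str u @ enc_str [v]) ps)"

definition enc_learn :: "nat \<Rightarrow> nat \<Rightarrow> bool list list \<Rightarrow> bool list" where
  "enc_learn d T S = enc_nat d @ enc_nat T @ concat (map enc_str S)"

text \<open>rep d r is the member of F_d represented by the output string r.\<close>
definition cons_poly_time ::
  "(nat \<Rightarrow> (bool list \<Rightarrow> bool) set) \<Rightarrow> (nat \<Rightarrow> bool list \<Rightarrow> (bool list \<Rightarrow> bool)) \<Rightarrow> tm \<Rightarrow> bool" where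
  "cons_poly_time F rep M \<longleftrightarrow> tm_wf M \<and>
     (\<exists>c k::nat. \<forall>d ps. (\<exists>f\<in>F d. \<forall>(u, v)\<in>set ps. f u = v) \<longrightarrow>
        (let inp = enc_cons d ps; t = c * (length inp + d + 1) ^ k; r = tm_output M t inp in
          tm_halts_within M t inp \<and> rep d r \<in> F d \<and> (\<forall>(u, v)\<in>set ps. rep d r u = v)))"

primrec iid_pmf :: "'a pmf \<Rightarrow> nat \<Rightarrow> 'a list pmf" where
  "iid_pmf D 0 = return_pmf []"
| "iid_pmf D (Suc m) = bind_pmf D (\<lambda>x. map_pmf (\<lambda>xs. x # xs) (iid_pmf D m))"

text \<open>The learning rule A is a Turing machine receiving d, T and the CoT sample;
  its output string r denotes the predictor (rep d r)^{e2e(T)}.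
  m is the sample size, tb the time bound.\<close>
definition cot_learnable_in_time ::
  "(nat \<Rightarrow> (bool list \<Rightarrow> bool) set) \<Rightarrow> (nat \<Rightarrow> bool list \<Rightarrow> (bool list \<Rightarrow> bool))
   \<Rightarrow> (nat \<Rightarrow> nat \<Rightarrow> nat \<Rightarrow> real \<Rightarrow> real \<Rightarrow> nat) \<Rightarrow> bool" where
  "cot_learnable_in_time F rep tb \<longleftrightarrow>
     (\<exists>A (m :: nat \<Rightarrow> nat \<Rightarrow> nat \<Rightarrow> real \<Rightarrow> real \<Rightarrow> nat). tm_wf A \<and>
       (\<forall>n d T \<epsilon> \<delta>. 0 < \<epsilon> \<and> \<epsilon> < 1 \<and> 0 < \<delta> \<and> \<delta> < 1 \<longrightarrow>
          (let t = tb n d T \<epsilon> \<delta>; mm = m n d T \<epsilon> \<delta> in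
           (\<forall>f\<in>F d. \<forall>xs. length xs = mm \<and> (\<forall>x\<in>set xs. length x \<le> n) \<longrightarrow>
              tm_halts_within A t (enc_learn d T (map (cot f T) xs))) \<and>
           (\<forall>D. \<forall>f\<in>F d. set_pmf D \<subseteq> {x. length x \<le> n} \<longrightarrow>
              measure_pmf.prob (iid_pmf D mm)
                {xs. measure_pmf.prob D
                   {x. e2e (rep d (tm_output A t (enc_learn d T (map (cot f T) xs)))) T x
                       \<noteq> e2e f T x} \<le> \<epsilon>} \<ge> 1 - \<delta>))))"

end

theory Submission
  imports Defs
begin

text \<open>A CoT trace of \<open>f\<close> on a prompt \<open>x\<close> consists of the labelled examples
  \<open>(cot f j x, f (cot f j x))\<close>, \<open>j < T\<close>, and every function that agrees with \<open>f\<close> on them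
  reproduces the trace, hence also the end-to-end output on \<open>x\<close>. The learner is a Turing machine
  that rewrites the CoT sample into these labelled examples, in polynomial time, and then runs the
  consistency machine for \<open>F d\<close> on them.

  For generalization, the end-to-end behaviour of \<open>g\<close> on prompts of length at most \<open>n\<close> depends
  only on \<open>g\<close> restricted to strings shorter than \<open>n + T\<close>, so by the Sauer-Shelah lemma there are at
  most \<open>2 ^ ((n + T) * V)\<close> such behaviours for a class of VC dimension \<open>V\<close>. A union bound then
  shows that \<open>((n + T) * V + ln (1 / \<delta>)) / \<epsilon>\<close> samples make every consistent hypothesis
  \<open>\<epsilon>\<close>-accurate with probability at least \<open>1 - \<delta>\<close>.\<close>

lemma cot_0 [simp]: "cot f 0 x = x"
  by (simp add: cot_def)

lemma cot_Suc: "cot f (Suc j) x = cot f j x @ [f (cot f j x)]"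
  by (simp add: cot_def cot_step_def)

lemma length_cot [simp]: "length (cot f j x) = length x + j"
  by (induction j) (auto simp: cot_Suc)

lemma take_cot: "j \<le> T \<Longrightarrow> take (length x + j) (cot f T x) = cot f j x"
proof (induction T)
  case (Suc T)
  show ?case
  proof (cases "j = Suc T")
    case False
    then have "j \<le> T" using Suc.prems by simp
    then show ?thesis using Suc.IH by (simp add: cot_Suc)
  qed (simp add: cot_Suc)
qed simp

lemma nth_cot: "j < T \<Longrightarrow> cot f T x ! (length x + j) = f (cot f j x)"
proof (induction T)
  case (Suc T)
  then show ?case by (cases "j = T") (simp_all add: cot_Suc nth_append)
qed simp

lemma cot_cong:
  "(\<And>y. length y < length x + T \<Longrightarrow> g y = g' y) \<Longrightarrow> j \<le> T \<Longrightarrow> cot g j x = cot g' j x"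
  by (induction j) (auto simp: cot_Suc)

lemma e2e_cong:
  "(\<And>y. length y < length x + T \<Longrightarrow> g y = g' y) \<Longrightarrow> e2e g T x = e2e g' T x"
  unfolding e2e_def using cot_cong[of x T g g' T] by simp

lemma cot_eq_if_agrees_on_steps:
  assumes "\<And>j. j < T \<Longrightarrow> h (cot f j x) = f (cot f j x)"
  shows "cot h T x = cot f T x"
proof -
  have "cot h j x = cot f j x" if "j \<le> T" for j
    using that by (induction j) (auto simp: cot_Suc assms)
  then show ?thesis by simp
qed

section \<open>The Sauer--Shelah lemma\<close>

definition set_shatters :: "'a set set \<Rightarrow> 'a set \<Rightarrow> bool" where
  "set_shatters H S \<longleftrightarrow> (\<forall>A\<subseteq>S. \<exists>h\<in>H. h \<inter> S = A)"

lemma set_shatters_image_Diff: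
  assumes "set_shatters ((\<lambda>h. h - {y}) ` H) S" "y \<notin> S"
  shows "set_shatters H S"
  unfolding set_shatters_def
proof (intro allI impI)
  fix A assume "A \<subseteq> S"
  then obtain h where "h \<in> H" "(h - {y}) \<inter> S = A"
    using assms(1) unfolding set_shatters_def by blast
  moreover have "(h - {y}) \<inter> S = h \<inter> S" using assms(2) by blast
  ultimately show "\<exists>h\<in>H. h \<inter> S = A" by auto
qed

lemma set_shatters_insert:
  assumes "set_shatters {h\<in>H. y \<notin> h \<and> insert y h \<in> H} S" "y \<notin> S"
  shows "set_shatters H (insert y S)"
  unfolding set_shatters_def
proof (intro allI impI)
  fix A assume A: "A \<subseteq> insert y S"
  then have "A - {y} \<subseteq> S" by auto
  then obtain h where h: "h \<in> H" "y \<notin> h" "insert y h \<in> H" "h \<inter> S = A - {y}"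
    using assms(1) unfolding set_shatters_def by blast
  show "\<exists>h\<in>H. h \<inter> insert y S = A"
  proof (cases "y \<in> A")
    case True
    then have "insert y h \<inter> insert y S = A" using h(4) A by auto
    then show ?thesis using h(3) by blast
  next
    case False
    then have "h \<inter> insert y S = A" using h(2,4) A by auto
    then show ?thesis using h(1) by blast
  qed
qed

lemma card_split_element:
  assumes "finite H"
  shows "card H = card ((\<lambda>h. h - {y}) ` H) + card {h\<in>H. y \<notin> h \<and> insert y h \<in> H}"
proof -
  define Ha where "Ha = {h\<in>H. y \<notin> h}"
  define Hy where "Hy = {h\<in>H. y \<in> h}"
  define Hb where "Hb = (\<lambda>h. h - {y}) ` Hy"
  have fin: "finite Ha" "finite Hy" "finite Hb" using assms by (simp_all add: Ha_def Hy_def Hb_def)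
  have "inj_on (\<lambda>h. h - {y}) Hy"
    by (rule inj_onI) (metis Hy_def insert_Diff mem_Collect_eq)
  then have "card Hb = card Hy" unfolding Hb_def by (rule card_image)
  moreover have "card H = card Ha + card Hy"
  proof -
    have "H = Ha \<union> Hy" "Ha \<inter> Hy = {}" by (auto simp: Ha_def Hy_def)
    then show ?thesis using card_Un_disjoint[OF fin(1,2)] by simp
  qed
  moreover have "card Ha + card Hb = card (Ha \<union> Hb) + card (Ha \<inter> Hb)"
    by (rule card_Un_Int[OF fin(1,3)])
  moreover have "(\<lambda>h. h - {y}) ` H = Ha \<union> Hb"
    by (auto simp: Ha_def Hb_def Hy_def image_iff)
  moreover have "{h\<in>H. y \<notin> h \<and> insert y h \<in> H} = Ha \<inter> Hb"
  proof (intro equalityI subsetI)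
    fix h assume "h \<in> {h\<in>H. y \<notin> h \<and> insert y h \<in> H}"
    then show "h \<in> Ha \<inter> Hb"
      unfolding Ha_def Hb_def Hy_def by (auto intro!: image_eqI[where x = "insert y h"])
  next
    fix h assume "h \<in> Ha \<inter> Hb"
    then obtain g where "h \<in> H" "y \<notin> h" "g \<in> H" "y \<in> g" "h = g - {y}"
      unfolding Ha_def Hb_def Hy_def by blast
    then show "h \<in> {h\<in>H. y \<notin> h \<and> insert y h \<in> H}" by (simp add: insert_absorb)
  qed
  ultimately show ?thesis by simp
qed

lemma shattered_subsets_split:
  assumes "y \<notin> Y"
  shows "{S. S \<subseteq> Y \<and> set_shatters ((\<lambda>h. h - {y}) ` H) S}
           \<union> insert y ` {S. S \<subseteq> Y \<and> set_shatters {h\<in>H. y \<notin> h \<and> insert y h \<in> H} S}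
         \<subseteq> {S. S \<subseteq> insert y Y \<and> set_shatters H S}"
proof (intro Un_least subsetI)
  fix S assume "S \<in> {S. S \<subseteq> Y \<and> set_shatters ((\<lambda>h. h - {y}) ` H) S}"
  with assms show "S \<in> {S. S \<subseteq> insert y Y \<and> set_shatters H S}"
    by (blast intro: set_shatters_image_Diff)
next
  fix S' assume "S' \<in> insert y ` {S. S \<subseteq> Y \<and> set_shatters {h\<in>H. y \<notin> h \<and> insert y h \<in> H} S}"
  then obtain S where "S' = insert y S" "S \<subseteq> Y" "set_shatters {h\<in>H. y \<notin> h \<and> insert y h \<in> H} S"
    by blast
  with assms show "S' \<in> {S. S \<subseteq> insert y Y \<and> set_shatters H S}"
    by (blast intro: set_shatters_insert)
qed

theorem card_le_card_shattered_subsets: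
  assumes "finite Y" "H \<subseteq> Pow Y"
  shows "card H \<le> card {S. S \<subseteq> Y \<and> set_shatters H S}"
  using assms
proof (induction Y arbitrary: H rule: finite_induct)
  case empty
  then have "H \<subseteq> {{}}" by auto
  show ?case
  proof (cases "H = {}")
    case False
    then have "H = {{}}" using \<open>H \<subseteq> {{}}\<close> by auto
    then have "{S. S \<subseteq> {} \<and> set_shatters H S} = {{}}" by (auto simp: set_shatters_def)
    then show ?thesis using \<open>H = {{}}\<close> by simp
  qed simp
next
  case (insert y Y)
  define H0 where "H0 = (\<lambda>h. h - {y}) ` H"
  define H1 where "H1 = {h\<in>H. y \<notin> h \<and> insert y h \<in> H}"
  define Sh0 where "Sh0 = {S. S \<subseteq> Y \<and> set_shatters H0 S}"
  define Sh1 where "Sh1 = insert y ` {S. S \<subseteq> Y \<and> set_shatters H1 S}"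
  define Sh where "Sh = {S. S \<subseteq> insert y Y \<and> set_shatters H S}"
  have "finite H"
    using insert.prems insert.hyps(1) by (meson finite_Pow_iff finite_insert rev_finite_subset)
  have H0: "H0 \<subseteq> Pow Y" and H1: "H1 \<subseteq> Pow Y"
    using insert.prems by (auto simp: H0_def H1_def)
  have "finite Sh" unfolding Sh_def using insert.hyps(1) by simp
  have "Sh0 \<union> Sh1 \<subseteq> Sh"
    unfolding Sh0_def Sh1_def Sh_def H0_def H1_def by (rule shattered_subsets_split[OF insert.hyps(2)])
  then have fin: "finite Sh0" "finite Sh1" using \<open>finite Sh\<close> by (auto intro: finite_subset)
  have "card Sh1 = card {S. S \<subseteq> Y \<and> set_shatters H1 S}"
    unfolding Sh1_def by (rule card_image) (use insert.hyps(2) in \<open>auto simp: inj_on_def\<close>)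
  then have "card H \<le> card Sh0 + card Sh1"
    using card_split_element[OF \<open>finite H\<close>, of y] insert.IH[OF H0] insert.IH[OF H1]
    unfolding H0_def H1_def Sh0_def by simp
  also have "\<dots> = card (Sh0 \<union> Sh1)"
    by (rule card_Un_disjoint[symmetric]) (use fin insert.hyps(2) in \<open>auto simp: Sh0_def Sh1_def\<close>)
  also have "\<dots> \<le> card Sh" by (rule card_mono[OF \<open>finite Sh\<close> \<open>Sh0 \<union> Sh1 \<subseteq> Sh\<close>])
  finally show ?case unfolding Sh_def .
qed

lemma card_subsets_card_le:
  assumes "finite Y"
  shows "card {S. S \<subseteq> Y \<and> card S \<le> D} \<le> (card Y + 1) ^ D"
proof -
  have "{S. S \<subseteq> Y \<and> card S \<le> D} = (\<Union>i\<le>D. {S. S \<subseteq> Y \<and> card S = i})" by auto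
  then have "card {S. S \<subseteq> Y \<and> card S \<le> D} \<le> (\<Sum>i\<le>D. card {S. S \<subseteq> Y \<and> card S = i})"
    using card_UN_le[of "{..D}" "\<lambda>i. {S. S \<subseteq> Y \<and> card S = i}"] by simp
  also have "\<dots> = (\<Sum>i\<le>D. card Y choose i)" using n_subsets[OF assms] by simp
  also have "\<dots> \<le> (\<Sum>i\<le>D. (D choose i) * card Y ^ i)"
  proof (rule sum_mono)
    fix i assume i: "i \<in> {..D}"
    have "card Y choose i \<le> card Y ^ i"
      by (cases "i \<le> card Y") (auto intro: binomial_le_pow simp: binomial_eq_0)
    also have "\<dots> \<le> (D choose i) * card Y ^ i" using i by (simp add: Suc_leI)
    finally show "card Y choose i \<le> (D choose i) * card Y ^ i" .
  qed
  also have "\<dots> = (card Y + 1) ^ D"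
    using binomial_ring[of "card Y" 1 D] by simp
  finally show ?thesis .
qed

corollary Sauer_Shelah:
  assumes "finite Y" "H \<subseteq> Pow Y" "\<And>S. S \<subseteq> Y \<Longrightarrow> set_shatters H S \<Longrightarrow> card S \<le> V"
  shows "card H \<le> (card Y + 1) ^ V"
proof -
  have "card H \<le> card {S. S \<subseteq> Y \<and> set_shatters H S}"
    by (rule card_le_card_shattered_subsets[OF assms(1,2)])
  also have "\<dots> \<le> card {S. S \<subseteq> Y \<and> card S \<le> V}"
    by (rule card_mono) (use assms in auto)
  also have "\<dots> \<le> (card Y + 1) ^ V"
    by (rule card_subsets_card_le[OF assms(1)])
  finally show ?thesis .
qed

lemma shatters_if_set_shatters_restrict:
  assumes "set_shatters ((\<lambda>g. {y\<in>Y. g y}) ` F) S" "S \<subseteq> Y"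
  shows "shatters F S"
  unfolding shatters_def
proof
  fix g :: "'a \<Rightarrow> bool"
  obtain f where "f \<in> F" "{y\<in>Y. f y} \<inter> S = {x\<in>S. g x}"
    using assms(1) unfolding set_shatters_def by (metis (no_types, lifting) image_iff mem_Collect_eq subsetI)
  then show "\<exists>f\<in>F. \<forall>x\<in>S. f x = g x" using assms(2) by blast
qed

lemma card_le_if_vcdim_le:
  assumes "vcdim F \<le> enat V" "finite S" "shatters F S"
  shows "card S \<le> V"
proof -
  have "enat (card S) \<le> vcdim F" unfolding vcdim_def using assms(2,3) by (auto intro!: Sup_upper)
  then have "enat (card S) \<le> enat V" using assms(1) order_trans by blast
  then show ?thesis by simp
qed

definition e2e_upto :: "nat \<Rightarrow> nat \<Rightarrow> (bool list \<Rightarrow> bool) \<Rightarrow> bool list \<Rightarrow> bool" where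
  "e2e_upto n T g x \<longleftrightarrow> length x \<le> n \<and> e2e g T x"

lemma card_bool_lists_shorter: "card {y::bool list. length y < k} + 1 \<le> 2 ^ k"
proof (induction k)
  case (Suc k)
  have "{y::bool list. length y < Suc k} = {y. length y < k} \<union> {y. length y = k}" by auto
  then have "card {y::bool list. length y < Suc k} \<le> card {y::bool list. length y < k} + card {y::bool list. length y = k}"
    by (simp add: card_Un_le)
  moreover have "card {y::bool list. length y = k} = 2 ^ k"
    using card_lists_length_eq[of "UNIV :: bool set" k] by simp
  ultimately show ?case using Suc by simp
qed simp

lemma finite_bool_lists_shorter: "finite {y::bool list. length y < k}"
  by (rule rev_finite_subset[OF finite_lists_length_le[of "UNIV :: bool set" k]]) auto

lemma e2e_upto_restrict:
  "e2e_upto n T g = e2e_upto n T (\<lambda>y. y \<in> {y. length y < n + T \<and> g y})"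
proof
  fix x
  show "e2e_upto n T g x = e2e_upto n T (\<lambda>y. y \<in> {y. length y < n + T \<and> g y}) x"
  proof (cases "length x \<le> n")
    case True
    then have "e2e g T x = e2e (\<lambda>y. y \<in> {y. length y < n + T \<and> g y}) T x"
      by (intro e2e_cong) auto
    then show ?thesis by (simp add: e2e_upto_def)
  qed (simp add: e2e_upto_def)
qed

lemma e2e_upto_image_eq:
  "e2e_upto n T ` F =
     (\<lambda>Z. e2e_upto n T (\<lambda>y. y \<in> Z)) ` (\<lambda>g. {y\<in>{y. length y < n + T}. g y}) ` F"
  unfolding image_comp comp_def using e2e_upto_restrict[of n T] by auto

lemma finite_e2e_upto_image: "finite (e2e_upto n T ` F)"
proof -
  have "(\<lambda>g. {y\<in>{y. length y < n + T}. g y}) ` F \<subseteq> Pow {y::bool list. length y < n + T}" by auto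
  then have "finite ((\<lambda>g. {y\<in>{y. length y < n + T}. g y}) ` F)"
    using finite_bool_lists_shorter by (meson finite_Pow_iff rev_finite_subset)
  then show ?thesis unfolding e2e_upto_image_eq by simp
qed

text \<open>Only the values of \<open>g\<close> on strings shorter than \<open>n + T\<close> matter, so Sauer--Shelah bounds
  the number of behaviours by \<open>(2 ^ (n + T)) ^ V\<close>.\<close>

lemma card_e2e_upto_image_le:
  fixes F :: "(bool list \<Rightarrow> bool) set"
  assumes VC: "\<And>S. finite S \<Longrightarrow> shatters F S \<Longrightarrow> card S \<le> V"
  shows "card (e2e_upto n T ` F) \<le> 2 ^ ((n + T) * V)"
proof -
  define Y where "Y = {y::bool list. length y < n + T}"
  define R where "R = (\<lambda>g. {y\<in>Y. g y}) ` F"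
  have "finite Y" unfolding Y_def by (rule finite_bool_lists_shorter)
  have "R \<subseteq> Pow Y" unfolding R_def by auto
  have "card (e2e_upto n T ` F) \<le> card R"
    unfolding e2e_upto_image_eq R_def Y_def by (rule card_image_le)
      (use \<open>finite Y\<close> \<open>R \<subseteq> Pow Y\<close> in \<open>auto simp: R_def Y_def intro: finite_subset\<close>)
  also have "\<dots> \<le> (card Y + 1) ^ V"
  proof (rule Sauer_Shelah[OF \<open>finite Y\<close> \<open>R \<subseteq> Pow Y\<close>])
    fix S assume "S \<subseteq> Y" "set_shatters R S"
    then have "shatters F S"
      unfolding R_def by (intro shatters_if_set_shatters_restrict)
    moreover have "finite S" using \<open>S \<subseteq> Y\<close> \<open>finite Y\<close> by (rule finite_subset)
    ultimately show "card S \<le> V" using VC by blast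
  qed
  also have "\<dots> \<le> (2 ^ (n + T)) ^ V"
    by (rule power_mono) (use card_bool_lists_shorter[of "n + T"] in \<open>simp_all add: Y_def\<close>)
  finally show ?thesis by (simp add: power_mult)
qed

section \<open>Consistent learners generalize\<close>

lemma set_pmf_iid_pmf: "set_pmf (iid_pmf D m) \<subseteq> {xs. length xs = m \<and> set xs \<subseteq> set_pmf D}"
  by (induction m) fastforce+

lemma emeasure_iid_pmf_all:
  "emeasure (measure_pmf (iid_pmf D m)) {xs. \<forall>x\<in>set xs. P x} = emeasure (measure_pmf D) {x. P x} ^ m"
proof (induction m)
  case (Suc m)
  let ?A = "{xs. \<forall>x\<in>set xs. P x}"
  have "emeasure (measure_pmf (iid_pmf D (Suc m))) ?A =
      (\<integral>\<^sup>+x. emeasure (measure_pmf (iid_pmf D m)) ((\<lambda>xs. x # xs) -` ?A) \<partial>measure_pmf D)"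
    by simp
  also have "\<dots> = (\<integral>\<^sup>+x. emeasure (measure_pmf (iid_pmf D m)) ?A * indicator {x. P x} x \<partial>measure_pmf D)"
    by (rule nn_integral_cong) (auto simp: indicator_def vimage_def)
  also have "\<dots> = emeasure (measure_pmf (iid_pmf D m)) ?A * emeasure (measure_pmf D) {x. P x}"
    by (rule nn_integral_cmult_indicator) simp
  finally show ?case using Suc by (simp add: mult.commute)
qed simp

lemma prob_iid_pmf_all:
  "measure_pmf.prob (iid_pmf D m) {xs. \<forall>x\<in>set xs. P x} = measure_pmf.prob D {x. P x} ^ m"
proof -
  have "ennreal (measure_pmf.prob (iid_pmf D m) {xs. \<forall>x\<in>set xs. P x}) = ennreal (measure_pmf.prob D {x. P x} ^ m)"
    using emeasure_iid_pmf_all[of D m P]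
    by (simp add: measure_pmf.emeasure_eq_measure ennreal_power)
  then show ?thesis by (simp add: ennreal_inj)
qed

lemma prob_some_consistent_bad_le:
  fixes D :: "'a pmf" and c :: "'a \<Rightarrow> 'b"
  assumes "finite B" "0 \<le> \<epsilon>" "\<And>\<beta>. \<beta> \<in> B \<Longrightarrow> \<epsilon> < measure_pmf.prob D {x. \<beta> x \<noteq> c x}"
  shows "measure_pmf.prob (iid_pmf D m) {xs. \<exists>\<beta>\<in>B. \<forall>x\<in>set xs. \<beta> x = c x}
           \<le> card B * exp (- \<epsilon> * m)"
proof -
  have single: "measure_pmf.prob (iid_pmf D m) {xs. \<forall>x\<in>set xs. \<beta> x = c x} \<le> exp (- \<epsilon> * m)"
    if "\<beta> \<in> B" for \<beta>
  proof -
    have "measure_pmf.prob D {x. \<beta> x = c x} = 1 - measure_pmf.prob D {x. \<beta> x \<noteq> c x}"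
      using measure_pmf.prob_compl[of "{x. \<beta> x \<noteq> c x}" D]
      by (simp add: Compl_eq_Diff_UNIV[symmetric] Collect_neg_eq[symmetric])
    then have "measure_pmf.prob (iid_pmf D m) {xs. \<forall>x\<in>set xs. \<beta> x = c x}
        = (1 - measure_pmf.prob D {x. \<beta> x \<noteq> c x}) ^ m"
      by (simp add: prob_iid_pmf_all)
    also have "\<dots> \<le> exp (- \<epsilon>) ^ m"
      using assms(3)[OF that] exp_ge_add_one_self[of "- \<epsilon>"]
      by (intro power_mono) (simp_all add: measure_pmf.prob_le_1)
    also have "\<dots> = exp (- \<epsilon> * m)" by (simp add: exp_of_nat_mult[symmetric] mult.commute)
    finally show ?thesis .
  qed
  have "measure_pmf.prob (iid_pmf D m) {xs. \<exists>\<beta>\<in>B. \<forall>x\<in>set xs. \<beta> x = c x}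
      = measure_pmf.prob (iid_pmf D m) (\<Union>\<beta>\<in>B. {xs. \<forall>x\<in>set xs. \<beta> x = c x})"
    by (rule arg_cong[where f = "measure_pmf.prob _"]) auto
  also have "\<dots> \<le> (\<Sum>\<beta>\<in>B. measure_pmf.prob (iid_pmf D m) {xs. \<forall>x\<in>set xs. \<beta> x = c x})"
    by (rule measure_pmf.finite_measure_subadditive_finite[OF assms(1)]) simp
  also have "\<dots> \<le> (\<Sum>\<beta>\<in>B. exp (- \<epsilon> * m))" by (rule sum_mono[OF single])
  finally show ?thesis by simp
qed

lemma two_pow_le_exp: "(2::real) ^ K \<le> exp (real K)"
proof -
  have "(2::real) ^ K \<le> exp 1 ^ K"
    using exp_ge_add_one_self[of 1] by (intro power_mono) simp_all
  then show ?thesis by (simp add: exp_of_nat_mult[symmetric])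
qed

lemma prob_e2e_upto_ne:
  assumes "set_pmf D \<subseteq> {x. length x \<le> n}"
  shows "measure_pmf.prob D {x. e2e_upto n T g x \<noteq> e2e_upto n T f x}
           = measure_pmf.prob D {x. e2e g T x \<noteq> e2e f T x}"
proof -
  have "{x. e2e_upto n T g x \<noteq> e2e_upto n T f x} \<inter> set_pmf D = {x. e2e g T x \<noteq> e2e f T x} \<inter> set_pmf D"
    using assms by (auto simp: e2e_upto_def)
  then show ?thesis by (metis measure_Int_set_pmf)
qed

lemma e2e_bad_samples_subset:
  assumes supp: "set_pmf D \<subseteq> {x. length x \<le> n}"
  shows "{xs. \<exists>g\<in>F. (\<forall>x\<in>set xs. e2e g T x = e2e f T x) \<and>
            \<epsilon> < measure_pmf.prob D {x. e2e g T x \<noteq> e2e f T x}}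
      \<subseteq> {xs. \<exists>\<beta>\<in>{\<beta> \<in> e2e_upto n T ` F. \<epsilon> < measure_pmf.prob D {x. \<beta> x \<noteq> e2e_upto n T f x}}.
               \<forall>x\<in>set xs. \<beta> x = e2e_upto n T f x}"
proof
  fix xs assume "xs \<in> {xs. \<exists>g\<in>F. (\<forall>x\<in>set xs. e2e g T x = e2e f T x) \<and>
          \<epsilon> < measure_pmf.prob D {x. e2e g T x \<noteq> e2e f T x}}"
  then obtain g where g: "g \<in> F" "\<forall>x\<in>set xs. e2e g T x = e2e f T x"
    "\<epsilon> < measure_pmf.prob D {x. e2e g T x \<noteq> e2e f T x}" by blast
  have "\<epsilon> < measure_pmf.prob D {x. e2e_upto n T g x \<noteq> e2e_upto n T f x}"
    unfolding prob_e2e_upto_ne[OF supp] by (rule g(3))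
  moreover have "\<forall>x\<in>set xs. e2e_upto n T g x = e2e_upto n T f x"
    using g(2) by (simp add: e2e_upto_def)
  ultimately show "xs \<in> {xs. \<exists>\<beta>\<in>{\<beta> \<in> e2e_upto n T ` F. \<epsilon> < measure_pmf.prob D {x. \<beta> x \<noteq> e2e_upto n T f x}}.
      \<forall>x\<in>set xs. \<beta> x = e2e_upto n T f x}"
    using g(1) by blast
qed

lemma prob_consistent_e2e_bad_le:
  fixes D :: "bool list pmf" and F :: "(bool list \<Rightarrow> bool) set"
  assumes VC: "\<And>S. finite S \<Longrightarrow> shatters F S \<Longrightarrow> card S \<le> V"
    and supp: "set_pmf D \<subseteq> {x. length x \<le> n}" and "0 < \<epsilon>" "0 < \<delta>"
    and m: "(real ((n + T) * V) + ln (1 / \<delta>)) / \<epsilon> \<le> real m"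
  shows "measure_pmf.prob (iid_pmf D m) {xs. \<exists>g\<in>F. (\<forall>x\<in>set xs. e2e g T x = e2e f T x) \<and>
            \<epsilon> < measure_pmf.prob D {x. e2e g T x \<noteq> e2e f T x}} \<le> \<delta>"
proof -
  define B where "B = {\<beta> \<in> e2e_upto n T ` F. \<epsilon> < measure_pmf.prob D {x. \<beta> x \<noteq> e2e_upto n T f x}}"
  have "B \<subseteq> e2e_upto n T ` F" unfolding B_def by blast
  then have "finite B" using finite_e2e_upto_image by (rule finite_subset)
  have "card B \<le> card (e2e_upto n T ` F)"
    by (rule card_mono[OF finite_e2e_upto_image \<open>B \<subseteq> e2e_upto n T ` F\<close>])
  also have "\<dots> \<le> 2 ^ ((n + T) * V)" by (rule card_e2e_upto_image_le[OF VC])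
  finally have card_B: "real (card B) \<le> 2 ^ ((n + T) * V)"
    by (metis of_nat_le_iff of_nat_numeral of_nat_power)
  have "{xs. \<exists>g\<in>F. (\<forall>x\<in>set xs. e2e g T x = e2e f T x) \<and>
            \<epsilon> < measure_pmf.prob D {x. e2e g T x \<noteq> e2e f T x}}
      \<subseteq> {xs. \<exists>\<beta>\<in>B. \<forall>x\<in>set xs. \<beta> x = e2e_upto n T f x}"
    unfolding B_def by (rule e2e_bad_samples_subset[OF supp])
  then have "measure_pmf.prob (iid_pmf D m) {xs. \<exists>g\<in>F. (\<forall>x\<in>set xs. e2e g T x = e2e f T x) \<and>
            \<epsilon> < measure_pmf.prob D {x. e2e g T x \<noteq> e2e f T x}}
      \<le> measure_pmf.prob (iid_pmf D m) {xs. \<exists>\<beta>\<in>B. \<forall>x\<in>set xs. \<beta> x = e2e_upto n T f x}"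
    by (rule measure_pmf.finite_measure_mono) simp
  also have "\<dots> \<le> card B * exp (- \<epsilon> * m)"
    by (rule prob_some_consistent_bad_le[OF \<open>finite B\<close>]) (use \<open>0 < \<epsilon>\<close> in \<open>simp_all add: B_def\<close>)
  also have "\<dots> \<le> exp (real ((n + T) * V)) * exp (- \<epsilon> * m)"
    by (rule mult_right_mono[OF order_trans[OF card_B two_pow_le_exp]]) simp
  also have "\<dots> = exp (real ((n + T) * V) - \<epsilon> * m)" by (simp add: exp_add[symmetric])
  also have "\<dots> \<le> exp (ln \<delta>)"
  proof -
    have "real ((n + T) * V) + ln (1 / \<delta>) \<le> \<epsilon> * m"
      using m \<open>0 < \<epsilon>\<close> by (simp add: pos_divide_le_eq mult.commute)
    moreover have "ln (1 / \<delta>) = - ln \<delta>" using \<open>0 < \<delta>\<close> by (simp add: ln_div)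
    ultimately show ?thesis by simp
  qed
  also have "\<dots> = \<delta>" using \<open>0 < \<delta>\<close> by simp
  finally show ?thesis .
qed

theorem consistent_e2e_learner_pac:
  fixes D :: "bool list pmf" and F :: "(bool list \<Rightarrow> bool) set"
    and h :: "bool list list \<Rightarrow> bool list \<Rightarrow> bool"
  assumes VC: "\<And>S. finite S \<Longrightarrow> shatters F S \<Longrightarrow> card S \<le> V"
    and supp: "set_pmf D \<subseteq> {x. length x \<le> n}" and "0 < \<epsilon>" "0 < \<delta>"
    and m: "(real ((n + T) * V) + ln (1 / \<delta>)) / \<epsilon> \<le> real m"
    and consistent: "\<And>xs. length xs = m \<Longrightarrow> set xs \<subseteq> set_pmf D \<Longrightarrow>
                       h xs \<in> F \<and> (\<forall>x\<in>set xs. e2e (h xs) T x = e2e f T x)"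
  shows "1 - \<delta> \<le> measure_pmf.prob (iid_pmf D m)
                   {xs. measure_pmf.prob D {x. e2e (h xs) T x \<noteq> e2e f T x} \<le> \<epsilon>}"
proof -
  define G where "G = {xs. measure_pmf.prob D {x. e2e (h xs) T x \<noteq> e2e f T x} \<le> \<epsilon>}"
  define Bad where "Bad = {xs. \<exists>g\<in>F. (\<forall>x\<in>set xs. e2e g T x = e2e f T x) \<and>
            \<epsilon> < measure_pmf.prob D {x. e2e g T x \<noteq> e2e f T x}}"
  have "(UNIV - G) \<inter> set_pmf (iid_pmf D m) \<subseteq> Bad"
  proof
    fix xs assume xs: "xs \<in> (UNIV - G) \<inter> set_pmf (iid_pmf D m)"
    then have "length xs = m" "set xs \<subseteq> set_pmf D" using set_pmf_iid_pmf by blast+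
    then show "xs \<in> Bad" using consistent xs unfolding Bad_def G_def by force
  qed
  then have "measure_pmf.prob (iid_pmf D m) (UNIV - G) \<le> measure_pmf.prob (iid_pmf D m) Bad"
    by (metis measure_Int_set_pmf measure_pmf.finite_measure_mono sets_measure_pmf UNIV_I)
  also have "\<dots> \<le> \<delta>"
    unfolding Bad_def by (rule prob_consistent_e2e_bad_le[OF VC supp]) (use assms m in auto)
  finally show ?thesis
    using measure_pmf.prob_compl[of G "iid_pmf D m"] unfolding G_def by simp
qed

definition sample_size :: "nat \<Rightarrow> nat \<Rightarrow> nat \<Rightarrow> real \<Rightarrow> real \<Rightarrow> nat" where
  "sample_size V n T \<epsilon> \<delta> = nat \<lceil>(real ((n + T) * V) + ln (1 / \<delta>)) / \<epsilon>\<rceil>"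

lemma sample_size_ge: "(real ((n + T) * V) + ln (1 / \<delta>)) / \<epsilon> \<le> real (sample_size V n T \<epsilon> \<delta>)"
  unfolding sample_size_def by linarith

lemma concat_replicate_snoc: "concat (replicate (Suc n) xs) = concat (replicate n xs) @ xs"
  by (induction n) auto

lemma set_concat_replicate: "set (concat (replicate n xs)) \<subseteq> set xs"
  by (induction n) auto

lemma length_concat_map_le: "(\<forall>s\<in>set S. length (g s) \<le> b) \<Longrightarrow> length (concat (map g S)) \<le> length S * b"
  by (induction S) auto

text \<open>\<open>cfg q p L R\<close>: state \<open>q\<close>, head on cell \<open>p\<close> reading the head of \<open>R\<close>, \<open>L\<close> the cells left of
  the head in reverse order; all other cells are blank.\<close>

definition nth_blank :: "nat list \<Rightarrow> nat \<Rightarrow> nat" where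
  "nth_blank xs j = (if j < length xs then xs ! j else 0)"

definition tape_of :: "int \<Rightarrow> nat list \<Rightarrow> nat list \<Rightarrow> int \<Rightarrow> nat" where
  "tape_of p L R = (\<lambda>i. if p \<le> i then nth_blank R (nat (i - p)) else nth_blank L (nat (p - 1 - i)))"

definition cfg :: "nat \<Rightarrow> int \<Rightarrow> nat list \<Rightarrow> nat list \<Rightarrow> config" where
  "cfg q p L R = (q, tape_of p L R, p)"

lemma cfg_Nil_right: "cfg q p L [] = cfg q p L [0]"
  unfolding cfg_def tape_of_def nth_blank_def by (auto intro!: ext simp: nat_less_iff)

lemma tape_of_Cons_head: "tape_of p L (a # R) p = a"
  unfolding tape_of_def nth_blank_def by simp

lemma tm_step_cfg_Right:
  assumes "q \<noteq> 1" "\<delta> q a = (q', s', Right)"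
  shows "tm_step (Q, S, \<delta>) (cfg q p L (a # R)) = cfg q' (p + 1) (s' # L) R"
proof -
  have "(tape_of p L (a # R))(p := s') = tape_of (p + 1) (s' # L) R"
  proof
    fix i
    show "((tape_of p L (a # R))(p := s')) i = tape_of (p + 1) (s' # L) R i"
    proof (cases "i = p")
      case True then show ?thesis by (simp add: tape_of_def nth_blank_def)
    next
      case False
      show ?thesis
      proof (cases "p < i")
        case True
        then have "nat (i - p) = Suc (nat (i - (p+1)))" by simp
        then show ?thesis using True False by (simp add: tape_of_def nth_blank_def)
      next
        case F2: False
        then have "nat (p + 1 - 1 - i) = Suc (nat (p - 1 - i))" using False by simp
        then show ?thesis using F2 False by (simp add: tape_of_def nth_blank_def)
      qed
    qed
  qed
  then show ?thesis using assms unfolding cfg_def tm_step_def by (simp add: tape_of_Cons_head)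
qed

lemma tm_step_cfg_Left:
  assumes "q \<noteq> 1" "\<delta> q a = (q', s', Left)"
  shows "tm_step (Q, S, \<delta>) (cfg q p (b # L) (a # R)) = cfg q' (p - 1) L (b # s' # R)"
proof -
  have "(tape_of p (b # L) (a # R))(p := s') = tape_of (p - 1) L (b # s' # R)"
  proof
    fix i
    show "((tape_of p (b # L) (a # R))(p := s')) i = tape_of (p - 1) L (b # s' # R) i"
    proof (cases "i = p")
      case True then show ?thesis by (simp add: tape_of_def nth_blank_def)
    next
      case False
      show ?thesis
      proof (cases "p < i")
        case True
        then have "nat (i - (p - 1)) = Suc (Suc (nat (i - p - 1)))" "nat (i - p) = Suc (nat (i - p - 1))" by simp_all
        then show ?thesis using True False by (simp add: tape_of_def nth_blank_def)
      next
        case F2: False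
        show ?thesis
        proof (cases "i = p - 1")
          case True then show ?thesis using F2 False by (simp add: tape_of_def nth_blank_def)
        next
          case F3: False
          then have "nat (p - 1 - i) = Suc (nat (p - 1 - 1 - i))" using F2 False by simp
          then show ?thesis using F2 F3 False by (simp add: tape_of_def nth_blank_def)
        qed
      qed
    qed
  qed
  then show ?thesis using assms unfolding cfg_def tm_step_def by (simp add: tape_of_Cons_head)
qed

lemma tm_step_cfg_Stay:
  assumes "q \<noteq> 1" "\<delta> q a = (q', s', Stay)"
  shows "tm_step (Q, S, \<delta>) (cfg q p L (a # R)) = cfg q' p L (s' # R)"
proof -
  have "(tape_of p L (a # R))(p := s') = tape_of p L (s' # R)"
    by (auto intro!: ext simp: tape_of_def nth_blank_def)
  then show ?thesis using assms unfolding cfg_def tm_step_def by (simp add: tape_of_Cons_head)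
qed

lemma cfg_left_blank: "cfg q p (L @ [0]) R = cfg q p L R"
  unfolding cfg_def tape_of_def nth_blank_def by (auto intro!: ext simp: nth_append)

lemma cfg_right_blanks: "cfg q p L (R @ replicate n 0) = cfg q p L R"
  unfolding cfg_def tape_of_def nth_blank_def by (auto intro!: ext simp: nth_append)

definition cfg0 :: "nat \<Rightarrow> nat list \<Rightarrow> nat list \<Rightarrow> config" where
  "cfg0 q L R = cfg q (int (length L)) L R"

lemma cfg0_Nil_right: "cfg0 q L [] = cfg0 q L [0]"
  unfolding cfg0_def by (rule cfg_Nil_right)

lemma cfg0_right_blanks: "cfg0 q L (R @ replicate n 0) = cfg0 q L R"
  unfolding cfg0_def by (rule cfg_right_blanks)

lemma cfg0_right_blank: "cfg0 q L (R @ [0]) = cfg0 q L R"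
  using cfg0_right_blanks[of q L R "Suc 0"] by simp

lemma tm_init_eq_cfg0: "tm_init x = cfg0 0 [] (map sym_of_bit x)"
  unfolding tm_init_def cfg0_def cfg_def tape_of_def nth_blank_def
  by (auto intro!: ext simp: nat_less_iff)

lemma funpow_tm_step_halted: "fst c = 1 \<Longrightarrow> (tm_step X ^^ n) c = c"
proof (induction n)
  case (Suc n)
  obtain Q S \<delta> where X: "X = (Q, S, \<delta>)" by (cases X) auto
  obtain q tp p where c: "c = (q, tp, p)" by (cases c) auto
  have "tm_step X c = c" using Suc.prems unfolding X c tm_step_def by simp
  then show ?case using Suc by (simp only: funpow_Suc_right o_apply)
qed simp

definition reach :: "tm \<Rightarrow> config \<Rightarrow> nat \<Rightarrow> config \<Rightarrow> bool" where
  "reach A c B c' \<longleftrightarrow> (\<exists>t\<le>B. (tm_step A ^^ t) c = c')"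

lemma reach_refl: "reach A c B c" unfolding reach_def by (rule exI[of _ 0]) simp

lemma reach_trans [trans]: "reach A c B1 c' \<Longrightarrow> reach A c' B2 c'' \<Longrightarrow> reach A c (B1 + B2) c''"
  unfolding reach_def
  by (metis (no_types, lifting) add_le_mono funpow_add o_apply add.commute)

lemma reach_mono: "reach A c B c' \<Longrightarrow> B \<le> B' \<Longrightarrow> reach A c B' c'"
  unfolding reach_def using order_trans by blast

lemma reach_weaken: "reach X c B c' \<Longrightarrow> c = c2 \<Longrightarrow> c' = c2' \<Longrightarrow> B \<le> B2 \<Longrightarrow> reach X c2 B2 c2'"
  using reach_mono by blast

lemma reach_funpow: "(tm_step A ^^ t) c = c' \<Longrightarrow> t \<le> B \<Longrightarrow> reach A c B c'"
  unfolding reach_def by blast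

lemma reach_step: "tm_step A c = c' \<Longrightarrow> reach A c 1 c'"
  by (rule reach_funpow[of 1]) simp_all

lemma funpow_walk_Right:
  assumes "q \<noteq> 1" "\<forall>s\<in>set xs. \<delta> q s = (q, g s, Right)"
  shows "(tm_step (Q, S, \<delta>) ^^ length xs) (cfg q p L (xs @ R)) = cfg q (p + int (length xs)) (rev (map g xs) @ L) R"
  using assms(2)
proof (induction xs arbitrary: p L)
  case Nil then show ?case by simp
next
  case (Cons x xs)
  have "(tm_step (Q, S, \<delta>) ^^ length (x # xs)) (cfg q p L ((x # xs) @ R))
      = (tm_step (Q, S, \<delta>) ^^ length xs) (tm_step (Q, S, \<delta>) (cfg q p L (x # xs @ R)))"
    by (simp only: length_Cons length_append_singleton funpow_Suc_right o_apply append_Cons rev.simps append.simps)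
  also have "tm_step (Q, S, \<delta>) (cfg q p L (x # xs @ R)) = cfg q (p + 1) (g x # L) (xs @ R)"
    using Cons.prems assms(1) by (intro tm_step_cfg_Right) auto
  also have "(tm_step (Q, S, \<delta>) ^^ length xs) (cfg q (p + 1) (g x # L) (xs @ R))
     = cfg q (p + 1 + int (length xs)) (rev (map g xs) @ g x # L) R"
    using Cons by simp
  finally show ?case by (simp add: algebra_simps)
qed

lemma funpow_walk_Left:
  assumes "q \<noteq> 1" "\<forall>s\<in>set (y # ys). \<delta> q s = (q, g s, Left)"
  shows "(tm_step (Q, S, \<delta>) ^^ Suc (length ys)) (cfg q p (rev ys @ z # L) (y # R))
     = cfg q (p - int (Suc (length ys))) L (z # map g ys @ g y # R)"
  using assms(2)
proof (induction ys arbitrary: y p R rule: rev_induct)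
  case Nil
  then show ?case using assms(1) by (simp add: tm_step_cfg_Left)
next
  case (snoc x ys)
  have "(tm_step (Q, S, \<delta>) ^^ Suc (length (ys @ [x]))) (cfg q p (rev (ys @ [x]) @ z # L) (y # R))
      = (tm_step (Q, S, \<delta>) ^^ Suc (length ys)) (tm_step (Q, S, \<delta>) (cfg q p (x # rev ys @ z # L) (y # R)))"
    by (simp only: length_append_singleton funpow_Suc_right o_apply rev_append rev.simps append.simps)
  also have "tm_step (Q, S, \<delta>) (cfg q p (x # rev ys @ z # L) (y # R)) = cfg q (p - 1) (rev ys @ z # L) (x # g y # R)"
    using snoc.prems assms(1) by (intro tm_step_cfg_Left) auto
  also have "(tm_step (Q, S, \<delta>) ^^ Suc (length ys)) (cfg q (p - 1) (rev ys @ z # L) (x # g y # R))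
     = cfg q (p - 1 - int (Suc (length ys))) L (z # map g ys @ g x # g y # R)"
    using snoc.prems by (intro snoc.IH) auto
  finally show ?case by (simp add: algebra_simps)
qed

lemma reach_walk_Right:
  assumes "q \<noteq> 1" "\<forall>s\<in>set xs. \<delta> q s = (q, g s, Right)" "length xs \<le> B"
  shows "reach (Q, S, \<delta>) (cfg q p L (xs @ R)) B (cfg q (p + int (length xs)) (rev (map g xs) @ L) R)"
  by (rule reach_funpow[OF funpow_walk_Right[where \<delta>=\<delta>, OF assms(1,2)] assms(3)])

lemma reach_walk_Left:
  assumes "q \<noteq> 1" "\<forall>s\<in>set (y # ys). \<delta> q s = (q, g s, Left)" "Suc (length ys) \<le> B"
  shows "reach (Q, S, \<delta>) (cfg q p (rev ys @ z # L) (y # R)) B (cfg q (p - int (Suc (length ys))) L (z # map g ys @ g y # R))"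
  by (rule reach_funpow[OF funpow_walk_Left[where \<delta>=\<delta>, OF assms(1,2)] assms(3)])

lemma reach_step_Right:
  assumes "q \<noteq> 1" "\<delta> q a = (q', s', Right)" "1 \<le> B"
  shows "reach (Q, S, \<delta>) (cfg q p L (a # R)) B (cfg q' (p + 1) (s' # L) R)"
  by (rule reach_mono[OF reach_step[OF tm_step_cfg_Right[where \<delta>=\<delta>, OF assms(1,2)]] assms(3)])

lemma reach_step_Left:
  assumes "q \<noteq> 1" "\<delta> q a = (q', s', Left)" "1 \<le> B"
  shows "reach (Q, S, \<delta>) (cfg q p (b # L) (a # R)) B (cfg q' (p - 1) L (b # s' # R))"
  by (rule reach_mono[OF reach_step[OF tm_step_cfg_Left[where \<delta>=\<delta>, OF assms(1,2)]] assms(3)])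

lemma reach_step_Stay:
  assumes "q \<noteq> 1" "\<delta> q a = (q', s', Stay)" "1 \<le> B"
  shows "reach (Q, S, \<delta>) (cfg q p L (a # R)) B (cfg q' p L (s' # R))"
  by (rule reach_mono[OF reach_step[OF tm_step_cfg_Stay[where \<delta>=\<delta>, OF assms(1,2)]] assms(3)])

lemma reach_cfg0_Right:
  assumes "q \<noteq> 1" "\<delta> q a = (q', s', Right)" "1 \<le> B"
  shows "reach (Q, S, \<delta>) (cfg0 q L (a # R)) B (cfg0 q' (s' # L) R)"
  using reach_step_Right[where \<delta>=\<delta>, OF assms, of Q S "int (length L)" L R] unfolding cfg0_def by (simp add: add.commute)

lemma reach_cfg0_Left:
  assumes "q \<noteq> 1" "\<delta> q a = (q', s', Left)" "1 \<le> B"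
  shows "reach (Q, S, \<delta>) (cfg0 q (b # L) (a # R)) B (cfg0 q' L (b # s' # R))"
  using reach_step_Left[where \<delta>=\<delta>, OF assms, of Q S "int (length (b # L))" b L R] unfolding cfg0_def by simp

lemma reach_cfg0_Stay:
  assumes "q \<noteq> 1" "\<delta> q a = (q', s', Stay)" "1 \<le> B"
  shows "reach (Q, S, \<delta>) (cfg0 q L (a # R)) B (cfg0 q' L (s' # R))"
  using reach_step_Stay[where \<delta>=\<delta>, OF assms] unfolding cfg0_def by simp

lemma reach_cfg0_walk_Right:
  assumes "q \<noteq> 1" "\<forall>s\<in>set xs. \<delta> q s = (q, g s, Right)" "length xs \<le> B"
  shows "reach (Q, S, \<delta>) (cfg0 q L (xs @ R)) B (cfg0 q (rev (map g xs) @ L) R)"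
  using reach_walk_Right[where \<delta>=\<delta>, OF assms, of Q S "int (length L)" L R] unfolding cfg0_def by (simp add: add.commute)

lemma reach_cfg0_walk_Left:
  assumes "q \<noteq> 1" "\<forall>s\<in>set (y # ys). \<delta> q s = (q, g s, Left)" "Suc (length ys) \<le> B"
  shows "reach (Q, S, \<delta>) (cfg0 q (rev ys @ z # L) (y # R)) B (cfg0 q L (z # map g ys @ g y # R))"
  using reach_walk_Left[where \<delta>=\<delta>, OF assms, of Q S "int (length (rev ys @ z # L))" z L R] unfolding cfg0_def by simp

lemma reach_cfg0_turn_walk_Left:
  assumes "q0 \<noteq> 1" "q \<noteq> 1" "\<delta> q0 a = (q, a', Left)" "\<forall>s\<in>set ys. \<delta> q s = (q, g s, Left)"
    "Suc (length ys) \<le> B"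
  shows "reach (Q, S, \<delta>) (cfg0 q0 (rev ys @ z # L) (a # R)) B (cfg0 q L (z # map g ys @ a' # R))"
proof (cases ys rule: rev_cases)
  case Nil
  then show ?thesis using reach_cfg0_Left[where \<delta>=\<delta>, OF assms(1,3)] assms(5) by simp
next
  case (snoc ys0 y)
  have 1: "reach (Q, S, \<delta>) (cfg0 q0 (rev ys @ z # L) (a # R)) 1 (cfg0 q (rev ys0 @ z # L) (y # a' # R))"
    using reach_cfg0_Left[where \<delta>=\<delta> and B=1 and b=y and L="rev ys0 @ z # L" and R=R, OF assms(1,3)] snoc by simp
  have 2: "reach (Q, S, \<delta>) (cfg0 q (rev ys0 @ z # L) (y # a' # R)) (length ys) (cfg0 q L (z # map g ys0 @ g y # a' # R))"
    using reach_cfg0_walk_Left[where \<delta>=\<delta> and g=g and y=y and ys=ys0 and B="length ys" and z=z and L=L and R="a' # R", OF assms(2)] assms(4) snoc by simp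
  show ?thesis using reach_trans[OF 1 2] assms(5) snoc by (auto intro: reach_mono)
qed

lemma reach_cfg0_turn_walk_Right:
  assumes "q0 \<noteq> 1" "q \<noteq> 1" "\<delta> q0 a = (q, a', Right)" "\<forall>s\<in>set xs. \<delta> q s = (q, g s, Right)"
    "Suc (length xs) \<le> B"
  shows "reach (Q, S, \<delta>) (cfg0 q0 L (a # xs @ R)) B (cfg0 q (rev (map g xs) @ a' # L) R)"
proof -
  have 1: "reach (Q, S, \<delta>) (cfg0 q0 L (a # xs @ R)) 1 (cfg0 q (a' # L) (xs @ R))"
    using reach_cfg0_Right[where \<delta>=\<delta>, OF assms(1,3)] by simp
  have 2: "reach (Q, S, \<delta>) (cfg0 q (a' # L) (xs @ R)) (length xs) (cfg0 q (rev (map g xs) @ a' # L) R)"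
    using reach_cfg0_walk_Right[where \<delta>=\<delta>, OF assms(2,4)] by simp
  show ?thesis using reach_trans[OF 1 2] assms(5) by (auto intro: reach_mono)
qed

lemma reach_cfg0_scan_Right:
  "q \<noteq> 1 \<Longrightarrow> \<forall>s\<in>set xs. \<delta> q s = (q, s, Right) \<Longrightarrow> length xs \<le> B \<Longrightarrow>
   reach (Q, S, \<delta>) (cfg0 q L (xs @ R)) B (cfg0 q (rev xs @ L) R)"
  using reach_cfg0_walk_Right[of q xs \<delta> id B Q S L R] by simp

lemma reach_cfg0_turn_scan_Left:
  "q0 \<noteq> 1 \<Longrightarrow> q \<noteq> 1 \<Longrightarrow> \<delta> q0 a = (q, a', Left) \<Longrightarrow> \<forall>s\<in>set ys. \<delta> q s = (q, s, Left) \<Longrightarrow>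
   Suc (length ys) \<le> B \<Longrightarrow> reach (Q, S, \<delta>) (cfg0 q0 (rev ys @ z # L) (a # R)) B (cfg0 q L (z # ys @ a' # R))"
  using reach_cfg0_turn_walk_Left[of q0 q \<delta> a a' ys id B Q S z L R] by simp

section \<open>The learning machine\<close>

definition solves_cons_within ::
  "(nat \<Rightarrow> (bool list \<Rightarrow> bool) set) \<Rightarrow> (nat \<Rightarrow> bool list \<Rightarrow> (bool list \<Rightarrow> bool)) \<Rightarrow> tm \<Rightarrow> nat \<Rightarrow> nat \<Rightarrow> bool"
where
  "solves_cons_within F rep M c k \<longleftrightarrow>
     (\<forall>d ps. (\<exists>f\<in>F d. \<forall>(u, v)\<in>set ps. f u = v) \<longrightarrow>
        (let inp = enc_cons d ps; t = c * (length inp + d + 1) ^ k; r = tm_output M t inp in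
          tm_halts_within M t inp \<and> rep d r \<in> F d \<and> (\<forall>(u, v)\<in>set ps. rep d r u = v)))"

lemma cons_poly_time_iff: "cons_poly_time F rep M \<longleftrightarrow> tm_wf M \<and> (\<exists>c k. solves_cons_within F rep M c k)"
  unfolding cons_poly_time_def solves_cons_within_def by blast

definition input_size_bound :: "nat \<Rightarrow> nat \<Rightarrow> nat \<Rightarrow> nat \<Rightarrow> nat" where
  "input_size_bound n d T m = 3 * (2 * d + 2 * T + 5 + m * (T + 1) * (2 * (n + T) + 6)) + 8"

definition learner_time :: "nat \<Rightarrow> nat \<Rightarrow> nat \<Rightarrow> nat \<Rightarrow> nat \<Rightarrow> nat \<Rightarrow> nat" where
  "learner_time c k n d T m = (let N = input_size_bound n d T m in
     (m + 2) * (T + 1) * (3 * (N + 5) * (N + 5)) + c * (N + d + 1) ^ k)"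

locale oracle_tm =
  fixes QM SM :: nat and dM :: "nat \<Rightarrow> nat \<Rightarrow> nat \<times> nat \<times> move"
  assumes oracle_wf: "tm_wf (QM, SM, dM)"
begin

text \<open>The learner first runs a preprocessing program on the states below 42 and then the machine
  \<open>(QM, SM, dM)\<close>, whose state \<open>q\<close> becomes \<open>42 + q\<close> (the halting state 1 stays 1). Besides the
  symbols of that machine it uses nine marker symbols: \<open>sU\<close>/\<open>sUp\<close> an unused/used unit of the
  counter holding \<open>T\<close>, \<open>sDn\<close> a cell to be deleted, \<open>sHs\<close> the boundary between the samples
  and the output, \<open>sK2\<close>/\<open>sK1\<close> the cursor on a bit pair/behind the last pair of a sample,
  \<open>sc1\<close>/\<open>sc2\<close> a copied bit, and \<open>sE\<close> the end of the encoding of \<open>d\<close>.\<close>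

abbreviation "sU \<equiv> SM"
abbreviation "sUp \<equiv> SM + 1"
abbreviation "sDn \<equiv> SM + 2"
abbreviation "sHs \<equiv> SM + 3"
abbreviation "sK1 \<equiv> SM + 4"
abbreviation "sK2 \<equiv> SM + 5"
abbreviation "sc1 \<equiv> SM + 6"
abbreviation "sc2 \<equiv> SM + 7"
abbreviation "sE \<equiv> SM + 8"

lemma three_le_SM: "3 \<le> SM" and two_le_QM: "2 \<le> QM"
  using oracle_wf by (auto simp: tm_wf_def)

definition lift_state :: "nat \<Rightarrow> nat" where "lift_state q = (if q = 1 then 1 else 42 + q)"

text \<open>States 0-8 skip \<open>d\<close>, turn \<open>T\<close> into \<open>T\<close> counter units and mark the end of the samples.
  States 9-35 treat one CoT sample: for each counter unit the cursor moves one pair to the left,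
  and the prefix before the cursor followed by the bit under it is appended to the output, both
  in the code of \<open>enc_str\<close>; afterwards the sample is overwritten by \<open>sDn\<close>. States 36-40 delete
  the marker cells by shifting the output to the left, and state 41 returns to cell 0.\<close>

definition prep_delta :: "nat \<Rightarrow> nat \<Rightarrow> nat \<times> nat \<times> move" where
  "prep_delta q s = (
     if q = 0 then (if s = 2 then (2, 2, Right) else if s = 1 then (3, 1, Right) else (q, s, Stay))
     else if q = 2 then (if s = 2 then (0, 2, Right) else (q, s, Stay))
     else if q = 3 then (if s = 1 then (4, sE, Right) else (q, s, Stay))
     else if q = 4 then (if s = 2 then (5, sU, Right) else if s = 1 then (6, sDn, Right) else (q, s, Stay))
     else if q = 5 then (if s = 2 then (4, sDn, Right) else (q, s, Stay))
     else if q = 6 then (if s = 1 then (7, sDn, Right) else (q, s, Stay))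
     else if q = 7 then (if s = 1 \<or> s = 2 then (7, s, Right) else if s = 0 then (8, sHs, Left) else (q, s, Stay))
     else if q = 8 then (if s = 1 \<or> s = 2 then (8, s, Left) else if s = sDn then (9, sDn, Right) else (q, s, Stay))
     else if q = 9 then (if s = 2 then (10, 2, Right) else if s = 1 then (11, sK1, Left)
                         else if s = sHs then (36, sHs, Right) else (q, s, Stay))
     else if q = 10 then (if s = 1 \<or> s = 2 then (9, s, Right) else (q, s, Stay))
     else if q = 11 then (if s = 1 \<or> s = 2 \<or> s = sDn \<or> s = sUp then (11, s, Left)
                          else if s = sU then (12, sUp, Right) else if s = sE then (32, sE, Right) else (q, s, Stay))
     else if q = 12 then (if s = 1 \<or> s = 2 \<or> s = sDn \<or> s = sUp then (12, s, Right)
                          else if s = sK1 then (13, 1, Left) else if s = sK2 then (13, 2, Left) else (q, s, Stay))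
     else if q = 13 then (if s = 1 \<or> s = 2 then (14, s, Left) else (q, s, Stay))
     else if q = 14 then (if s = 2 then (15, sK2, Left) else (q, s, Stay))
     else if q = 15 then (if s = 1 \<or> s = 2 \<or> s = sHs \<or> s = sK2 then (15, s, Left)
                          else if s = sc1 \<or> s = sc2 \<or> s = sDn then (16, s, Right) else (q, s, Stay))
     else if q = 16 then (if s = 1 then (17, sc1, Right) else if s = 2 then (18, sc2, Right)
                          else if s = sK2 then (19, sK2, Right) else (q, s, Stay))
     else if q = 17 \<or> q = 18 then (if s = 1 \<or> s = 2 \<or> s = sK2 \<or> s = sHs then (q, s, Right)
                          else if s = 0 then (15, q - 16, Left) else (q, s, Stay))
     else if q = 19 then (if s = 1 \<or> s = 2 then (16 + 4 * s, s, Right) else (q, s, Stay))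
     else if q = 20 \<or> q = 24 then (if s = 1 \<or> s = 2 \<or> s = sHs then (q, s, Right)
                          else if s = 0 then (q + 1, 1, Right) else (q, s, Stay))
     else if q = 21 \<or> q = 25 then (if s = 0 then (q + 1, 1, Right) else (q, s, Stay))
     else if q = 22 \<or> q = 26 then (if s = 0 then (q + 1, 2, Right) else (q, s, Stay))
     else if q = 23 \<or> q = 27 then (if s = 0 then (28, (q - 19) div 4, Right) else (q, s, Stay))
     else if q = 28 then (if s = 0 then (29, 1, Right) else (q, s, Stay))
     else if q = 29 then (if s = 0 then (30, 1, Left) else (q, s, Stay))
     else if q = 30 then (if s = 1 \<or> s = 2 \<or> s = sHs then (30, s, Left)
                          else if s = sK2 then (31, sK2, Left) else (q, s, Stay))
     else if q = 31 then (if s = sc1 then (31, 1, Left) else if s = sc2 then (31, 2, Left)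
                          else if s = sDn then (11, sDn, Left) else (q, s, Stay))
     else if q = 32 then (if s = sUp \<or> s = sU then (32, sU, Right) else if s = sDn then (32, sDn, Right)
                          else if s = 1 \<or> s = 2 \<or> s = sK1 \<or> s = sK2 then (33, s, Stay) else (q, s, Stay))
     else if q = 33 then (if s = 2 \<or> s = sK2 then (34, sDn, Right) else if s = 1 \<or> s = sK1 then (35, sDn, Right)
                          else (q, s, Stay))
     else if q = 34 then (if s = 1 \<or> s = 2 then (33, sDn, Right) else (q, s, Stay))
     else if q = 35 then (if s = 1 then (9, sDn, Right) else (q, s, Stay))
     else if q = 36 then (if s = 1 \<or> s = 2 \<or> s = sU \<or> s = sDn \<or> s = sHs then (36, s, Right)
                          else if s = 0 then (37, 0, Left) else (q, s, Stay))
     else if q = 37 \<or> q = 38 \<or> q = 39 then (if s = 1 \<or> s = 2 then (37 + s, q - 37, Left)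
                          else if s = sU \<or> s = sDn \<or> s = sHs then (40, q - 37, Left) else (q, s, Stay))
     else if q = 40 then (if s = sU \<or> s = sDn \<or> s = sHs then (36, s, Right)
                          else if s = sE then (41, 1, Left) else (q, s, Stay))
     else if q = 41 then (if s = 1 \<or> s = 2 then (41, s, Left) else if s = 0 then (42, 0, Right) else (q, s, Stay))
     else (q, s, Stay))"

definition learner_delta :: "nat \<Rightarrow> nat \<Rightarrow> nat \<times> nat \<times> move" where
  "learner_delta q s = (if q < 42 then (case prep_delta q s of (q', s', mv) \<Rightarrow>
                if q' \<le> 42 \<and> s' < SM + 9 then (q', s', mv) else (q, s, Stay))
             else if q - 42 < QM \<and> s < SM then (case dM (q - 42) s of (q', s', mv) \<Rightarrow> (lift_state q', s', mv))
             else (q, s, Stay))"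

abbreviation "learner \<equiv> (42 + QM, SM + 9, learner_delta)"

lemma learner_wf: "tm_wf learner"
proof -
  have "\<forall>q<42 + QM. \<forall>s<SM + 9. case learner_delta q s of (q', s', _) \<Rightarrow> q' < 42 + QM \<and> s' < SM + 9"
  proof (intro allI impI)
    fix q s assume q: "q < 42 + QM" and s: "s < SM + 9"
    show "case learner_delta q s of (q', s', _) \<Rightarrow> q' < 42 + QM \<and> s' < SM + 9"
    proof (cases "q < 42")
      case True
      then show ?thesis using q s two_le_QM
        by (cases "prep_delta q s") (auto simp: learner_delta_def)
    next
      case False
      show ?thesis
      proof (cases "q - 42 < QM \<and> s < SM")
        case True
        obtain q' s' mv where e: "dM (q - 42) s = (q', s', mv)" by (cases "dM (q - 42) s")
        have "q' < QM" "s' < SM" 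
        proof -
          have "\<forall>q<QM. \<forall>s<SM. case dM q s of (q', s', _) \<Rightarrow> q' < QM \<and> s' < SM"
            using oracle_wf unfolding tm_wf_def by simp
          then show "q' < QM" "s' < SM" using True e by fastforce+
        qed
        then show ?thesis using False True e q by (auto simp: learner_delta_def lift_state_def)
      next
        case F2: False
        then show ?thesis using False q s by (auto simp: learner_delta_def)
      qed
    qed
  qed
  then show ?thesis unfolding tm_wf_def using two_le_QM three_le_SM by auto
qed

definition marked :: "nat \<Rightarrow> nat" where "marked x = (if x = 1 then sc1 else sc2)"
definition unmarked :: "nat \<Rightarrow> nat" where "unmarked x = (if x = sc1 then 1 else 2)"

lemma unmarked_marked[simp]: "x \<in> {1,2} \<Longrightarrow> unmarked (marked x) = x"
  using three_le_SM by (auto simp: marked_def unmarked_def)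

lemma t0_2: "learner_delta 0 2 = (2, 2, Right)" using three_le_SM by (auto simp: learner_delta_def prep_delta_def marked_def)
lemma t0_1: "learner_delta 0 1 = (3, 1, Right)" using three_le_SM by (auto simp: learner_delta_def prep_delta_def marked_def)
lemma t2_2: "learner_delta 2 2 = (0, 2, Right)" using three_le_SM by (auto simp: learner_delta_def prep_delta_def marked_def)
lemma t3_1: "learner_delta 3 1 = (4, sE, Right)" using three_le_SM by (auto simp: learner_delta_def prep_delta_def marked_def)
lemma t4_2: "learner_delta 4 2 = (5, sU, Right)" using three_le_SM by (auto simp: learner_delta_def prep_delta_def marked_def)
lemma t4_1: "learner_delta 4 1 = (6, sDn, Right)" using three_le_SM by (auto simp: learner_delta_def prep_delta_def marked_def)
lemma t5_2: "learner_delta 5 2 = (4, sDn, Right)" using three_le_SM by (auto simp: learner_delta_def prep_delta_def marked_def)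
lemma t6_1: "learner_delta 6 1 = (7, sDn, Right)" using three_le_SM by (auto simp: learner_delta_def prep_delta_def marked_def)
lemma t7_b: "s \<in> {1,2} \<Longrightarrow> learner_delta 7 s = (7, s, Right)" using three_le_SM by (auto simp: learner_delta_def prep_delta_def marked_def)
lemma t7_0: "learner_delta 7 0 = (8, sHs, Left)" using three_le_SM by (auto simp: learner_delta_def prep_delta_def marked_def)
lemma t8_b: "s \<in> {1,2} \<Longrightarrow> learner_delta 8 s = (8, s, Left)" using three_le_SM by (auto simp: learner_delta_def prep_delta_def marked_def)
lemma t8_Dn: "learner_delta 8 sDn = (9, sDn, Right)" using three_le_SM by (auto simp: learner_delta_def prep_delta_def marked_def)
lemma t9_2: "learner_delta 9 2 = (10, 2, Right)" using three_le_SM by (auto simp: learner_delta_def prep_delta_def marked_def)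
lemma t9_1: "learner_delta 9 1 = (11, sK1, Left)" using three_le_SM by (auto simp: learner_delta_def prep_delta_def marked_def)
lemma t9_Hs: "learner_delta 9 sHs = (36, sHs, Right)" using three_le_SM by (auto simp: learner_delta_def prep_delta_def marked_def)
lemma t10_b: "s \<in> {1,2} \<Longrightarrow> learner_delta 10 s = (9, s, Right)" using three_le_SM by (auto simp: learner_delta_def prep_delta_def marked_def)
lemma t11_skip: "s \<in> {1,2,sDn,sUp} \<Longrightarrow> learner_delta 11 s = (11, s, Left)" using three_le_SM by (auto simp: learner_delta_def prep_delta_def marked_def)
lemma t11_U: "learner_delta 11 sU = (12, sUp, Right)" using three_le_SM by (auto simp: learner_delta_def prep_delta_def marked_def)
lemma t11_E: "learner_delta 11 sE = (32, sE, Right)" using three_le_SM by (auto simp: learner_delta_def prep_delta_def marked_def)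
lemma t12_skip: "s \<in> {1,2,sDn,sUp} \<Longrightarrow> learner_delta 12 s = (12, s, Right)" using three_le_SM by (auto simp: learner_delta_def prep_delta_def marked_def)
lemma t12_K1: "learner_delta 12 sK1 = (13, 1, Left)" using three_le_SM by (auto simp: learner_delta_def prep_delta_def marked_def)
lemma t12_K2: "learner_delta 12 sK2 = (13, 2, Left)" using three_le_SM by (auto simp: learner_delta_def prep_delta_def marked_def)
lemma t13: "s \<in> {1,2} \<Longrightarrow> learner_delta 13 s = (14, s, Left)" using three_le_SM by (auto simp: learner_delta_def prep_delta_def marked_def)
lemma t14: "learner_delta 14 2 = (15, sK2, Left)" using three_le_SM by (auto simp: learner_delta_def prep_delta_def marked_def)
lemma t15_skip: "s \<in> {1,2,sHs,sK2} \<Longrightarrow> learner_delta 15 s = (15, s, Left)" using three_le_SM by (auto simp: learner_delta_def prep_delta_def marked_def)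
lemma t15_stop: "s \<in> {sc1,sc2,sDn} \<Longrightarrow> learner_delta 15 s = (16, s, Right)" using three_le_SM by (auto simp: learner_delta_def prep_delta_def marked_def)
lemma t16_b: "x \<in> {1,2} \<Longrightarrow> learner_delta 16 x = (16 + x, marked x, Right)" using three_le_SM by (auto simp: learner_delta_def prep_delta_def marked_def)
lemma t16_K2: "learner_delta 16 sK2 = (19, sK2, Right)" using three_le_SM by (auto simp: learner_delta_def prep_delta_def marked_def)
lemma t17_skip: "x \<in> {1,2} \<Longrightarrow> s \<in> {1,2,sK2,sHs} \<Longrightarrow> learner_delta (16 + x) s = (16 + x, s, Right)" using three_le_SM by (auto simp: learner_delta_def prep_delta_def marked_def)
lemma t17_0: "x \<in> {1,2} \<Longrightarrow> learner_delta (16 + x) 0 = (15, x, Left)" using three_le_SM by (auto simp: learner_delta_def prep_delta_def marked_def)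
lemma t15_marked: "x \<in> {1,2} \<Longrightarrow> learner_delta 15 (marked x) = (16, marked x, Right)" using three_le_SM by (auto simp: learner_delta_def prep_delta_def marked_def)
lemma t19: "b \<in> {1,2} \<Longrightarrow> learner_delta 19 b = (16 + 4 * b, b, Right)" using three_le_SM by (auto simp: learner_delta_def prep_delta_def marked_def)
lemma ta0_skip: "b \<in> {1,2} \<Longrightarrow> s \<in> {1,2,sHs} \<Longrightarrow> learner_delta (16 + 4 * b) s = (16 + 4 * b, s, Right)" using three_le_SM by (auto simp: learner_delta_def prep_delta_def marked_def)
lemma ta0_0: "b \<in> {1,2} \<Longrightarrow> learner_delta (16 + 4 * b) 0 = (17 + 4 * b, 1, Right)" using three_le_SM by (auto simp: learner_delta_def prep_delta_def marked_def)
lemma ta1: "b \<in> {1,2} \<Longrightarrow> learner_delta (17 + 4 * b) 0 = (18 + 4 * b, 1, Right)" using three_le_SM by (auto simp: learner_delta_def prep_delta_def marked_def)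
lemma ta2: "b \<in> {1,2} \<Longrightarrow> learner_delta (18 + 4 * b) 0 = (19 + 4 * b, 2, Right)" using three_le_SM by (auto simp: learner_delta_def prep_delta_def marked_def)
lemma ta3: "b \<in> {1,2} \<Longrightarrow> learner_delta (19 + 4 * b) 0 = (28, b, Right)" using three_le_SM by (auto simp: learner_delta_def prep_delta_def marked_def)
lemma t28: "learner_delta 28 0 = (29, 1, Right)" using three_le_SM by (auto simp: learner_delta_def prep_delta_def marked_def)
lemma t29: "learner_delta 29 0 = (30, 1, Left)" using three_le_SM by (auto simp: learner_delta_def prep_delta_def marked_def)
lemma t30_skip: "s \<in> {1,2,sHs} \<Longrightarrow> learner_delta 30 s = (30, s, Left)" using three_le_SM by (auto simp: learner_delta_def prep_delta_def marked_def)
lemma t30_K2: "learner_delta 30 sK2 = (31, sK2, Left)" using three_le_SM by (auto simp: learner_delta_def prep_delta_def marked_def)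
lemma t31_marked: "x \<in> {1,2} \<Longrightarrow> learner_delta 31 (marked x) = (31, x, Left)" using three_le_SM by (auto simp: learner_delta_def prep_delta_def marked_def)
lemma t31_Dn: "learner_delta 31 sDn = (11, sDn, Left)" using three_le_SM by (auto simp: learner_delta_def prep_delta_def marked_def)
lemma t32_Up: "learner_delta 32 sUp = (32, sU, Right)" using three_le_SM by (auto simp: learner_delta_def prep_delta_def marked_def)
lemma t32_Dn: "learner_delta 32 sDn = (32, sDn, Right)" using three_le_SM by (auto simp: learner_delta_def prep_delta_def marked_def)
lemma t32_stop: "s \<in> {1,2,sK1,sK2} \<Longrightarrow> learner_delta 32 s = (33, s, Stay)" using three_le_SM by (auto simp: learner_delta_def prep_delta_def marked_def)
lemma t33_2: "s \<in> {2,sK2} \<Longrightarrow> learner_delta 33 s = (34, sDn, Right)" using three_le_SM by (auto simp: learner_delta_def prep_delta_def marked_def)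
lemma t33_1: "s \<in> {1,sK1} \<Longrightarrow> learner_delta 33 s = (35, sDn, Right)" using three_le_SM by (auto simp: learner_delta_def prep_delta_def marked_def)
lemma t34: "s \<in> {1,2} \<Longrightarrow> learner_delta 34 s = (33, sDn, Right)" using three_le_SM by (auto simp: learner_delta_def prep_delta_def marked_def)
lemma t35: "learner_delta 35 1 = (9, sDn, Right)" using three_le_SM by (auto simp: learner_delta_def prep_delta_def marked_def)
lemma t36_skip: "s \<in> {1,2,sU,sDn,sHs} \<Longrightarrow> learner_delta 36 s = (36, s, Right)" using three_le_SM by (auto simp: learner_delta_def prep_delta_def marked_def)
lemma t36_0: "learner_delta 36 0 = (37, 0, Left)" using three_le_SM by (auto simp: learner_delta_def prep_delta_def marked_def)
lemma t37_b: "x \<le> 2 \<Longrightarrow> s \<in> {1,2} \<Longrightarrow> learner_delta (37 + x) s = (37 + s, x, Left)" using three_le_SM by (auto simp: learner_delta_def prep_delta_def marked_def)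
lemma t37_g: "x \<le> 2 \<Longrightarrow> s \<in> {sU,sDn,sHs} \<Longrightarrow> learner_delta (37 + x) s = (40, x, Left)" using three_le_SM by (auto simp: learner_delta_def prep_delta_def marked_def)
lemma t40_g: "s \<in> {sU,sDn,sHs} \<Longrightarrow> learner_delta 40 s = (36, s, Right)" using three_le_SM by (auto simp: learner_delta_def prep_delta_def marked_def)
lemma t40_E: "learner_delta 40 sE = (41, 1, Left)" using three_le_SM by (auto simp: learner_delta_def prep_delta_def marked_def)
lemma t41_b: "s \<in> {1,2} \<Longrightarrow> learner_delta 41 s = (41, s, Left)" using three_le_SM by (auto simp: learner_delta_def prep_delta_def marked_def)
lemma t41_0: "learner_delta 41 0 = (42, 0, Right)" using three_le_SM by (auto simp: learner_delta_def prep_delta_def marked_def)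

end

declare One_nat_def[simp del]

context oracle_tm begin

definition pair_syms :: "bool list \<Rightarrow> nat list" where
  "pair_syms xs = concat (map (\<lambda>b. [2, sym_of_bit b]) xs)"
definition str_syms :: "bool list \<Rightarrow> nat list" where "str_syms xs = pair_syms xs @ [1, 1]"

lemma sym_of_bit_in[simp]: "sym_of_bit b \<in> {1,2}" "sym_of_bit b \<noteq> 0"
  by (auto simp: sym_of_bit_def)

lemma sym_of_bit_eq_1[simp]: "sym_of_bit b = 1 \<longleftrightarrow> \<not> b" and sym_of_bit_eq_2[simp]: "sym_of_bit b = 2 \<longleftrightarrow> b"
  by (auto simp: sym_of_bit_def)

lemma sym_of_bit_neq[simp]: "sym_of_bit b \<noteq> SM + k" "SM + k \<noteq> sym_of_bit b"
  using three_le_SM by (auto simp: sym_of_bit_def)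

lemma pair_syms_Nil[simp]: "pair_syms [] = []" and pair_syms_Cons[simp]: "pair_syms (x # xs) = 2 # sym_of_bit x # pair_syms xs"
  and pair_syms_append[simp]: "pair_syms (xs @ ys) = pair_syms xs @ pair_syms ys"
  by (auto simp: pair_syms_def)

lemma length_pair_syms[simp]: "length (pair_syms xs) = 2 * length xs"
  by (induction xs) auto

lemma set_pair_syms: "set (pair_syms xs) \<subseteq> {1,2}"
  by (induction xs) auto

lemma mem_pair_syms[simp]: "x \<in> set (pair_syms xs) \<Longrightarrow> x = 1 \<or> x = 2"
  using set_pair_syms by blast

lemma map_sym_enc_str: "map sym_of_bit (enc_str xs) = str_syms xs"
  by (induction xs) (auto simp: enc_str_def str_syms_def sym_of_bit_def)

text \<open>The generic rules specialised to the learner: with a schematic transition function, applying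
  them to a concrete transition lemma would require higher-order unification.\<close>

lemma learner_step_Right:
  "q \<noteq> 1 \<Longrightarrow> learner_delta q a = (q', s', Right) \<Longrightarrow> 1 \<le> B \<Longrightarrow>
   reach learner (cfg0 q L (a # R)) B (cfg0 q' (s' # L) R)"
  by (rule reach_cfg0_Right)

lemma learner_step_Left:
  "q \<noteq> 1 \<Longrightarrow> learner_delta q a = (q', s', Left) \<Longrightarrow> 1 \<le> B \<Longrightarrow>
   reach learner (cfg0 q (b # L) (a # R)) B (cfg0 q' L (b # s' # R))"
  by (rule reach_cfg0_Left)

lemma learner_step_Stay:
  "q \<noteq> 1 \<Longrightarrow> learner_delta q a = (q', s', Stay) \<Longrightarrow> 1 \<le> B \<Longrightarrow>
   reach learner (cfg0 q L (a # R)) B (cfg0 q' L (s' # R))"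
  by (rule reach_cfg0_Stay)

lemma learner_turn_walk_Left:
  "q0 \<noteq> 1 \<Longrightarrow> q \<noteq> 1 \<Longrightarrow> learner_delta q0 a = (q, a', Left) \<Longrightarrow>
   \<forall>s\<in>set ys. learner_delta q s = (q, g s, Left) \<Longrightarrow> Suc (length ys) \<le> B \<Longrightarrow>
   reach learner (cfg0 q0 (rev ys @ z # L) (a # R)) B (cfg0 q L (z # map g ys @ a' # R))"
  by (rule reach_cfg0_turn_walk_Left)

lemma learner_turn_walk_Right:
  "q0 \<noteq> 1 \<Longrightarrow> q \<noteq> 1 \<Longrightarrow> learner_delta q0 a = (q, a', Right) \<Longrightarrow>
   \<forall>s\<in>set xs. learner_delta q s = (q, g s, Right) \<Longrightarrow> Suc (length xs) \<le> B \<Longrightarrow>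
   reach learner (cfg0 q0 L (a # xs @ R)) B (cfg0 q (rev (map g xs) @ a' # L) R)"
  by (rule reach_cfg0_turn_walk_Right)

lemma learner_scan_Right:
  "q \<noteq> 1 \<Longrightarrow> \<forall>s\<in>set xs. learner_delta q s = (q, s, Right) \<Longrightarrow> length xs \<le> B \<Longrightarrow>
   reach learner (cfg0 q L (xs @ R)) B (cfg0 q (rev xs @ L) R)"
  by (rule reach_cfg0_scan_Right)

lemma learner_turn_scan_Left:
  "q0 \<noteq> 1 \<Longrightarrow> q \<noteq> 1 \<Longrightarrow> learner_delta q0 a = (q, a', Left) \<Longrightarrow>
   \<forall>s\<in>set ys. learner_delta q s = (q, s, Left) \<Longrightarrow> Suc (length ys) \<le> B \<Longrightarrow>
   reach learner (cfg0 q0 (rev ys @ z # L) (a # R)) B (cfg0 q L (z # ys @ a' # R))"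
  by (rule reach_cfg0_turn_scan_Left)

lemma run_skip_d: "reach learner (cfg0 0 L (concat (replicate d [2,2]) @ 1 # 1 # R)) (2 * d + 2)
   (cfg0 4 (sE # 1 # rev (concat (replicate d [2,2])) @ L) R)"
proof (induction d arbitrary: L)
  case 0
  have "reach learner (cfg0 0 L (1 # 1 # R)) 1 (cfg0 3 (1 # L) (1 # R))"
    by (rule learner_step_Right[OF _ t0_1]) simp_all
  moreover have "reach learner (cfg0 3 (1 # L) (1 # R)) 1 (cfg0 4 (sE # 1 # L) R)"
    by (rule learner_step_Right[OF _ t3_1]) simp_all
  ultimately have "reach learner (cfg0 0 L (1 # 1 # R)) (1 + 1) (cfg0 4 (sE # 1 # L) R)" by (rule reach_trans)
  then show ?case by (rule reach_weaken) simp_all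
next
  case (Suc d)
  have "reach learner (cfg0 0 L (2 # 2 # concat (replicate d [2,2]) @ 1 # 1 # R)) 1 (cfg0 2 (2 # L) (2 # concat (replicate d [2,2]) @ 1 # 1 # R))"
    by (rule learner_step_Right[OF _ t0_2]) simp_all
  moreover have "reach learner (cfg0 2 (2 # L) (2 # concat (replicate d [2,2]) @ 1 # 1 # R)) 1 (cfg0 0 (2 # 2 # L) (concat (replicate d [2,2]) @ 1 # 1 # R))"
    by (rule learner_step_Right[OF _ t2_2]) simp_all
  moreover note Suc[of "2 # 2 # L"]
  ultimately have "reach learner (cfg0 0 L (2 # 2 # concat (replicate d [2,2]) @ 1 # 1 # R)) (1 + 1 + (2 * d + 2))
     (cfg0 4 (sE # 1 # rev (concat (replicate d [2, 2])) @ 2 # 2 # L) R)"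
    using reach_trans by blast
  then show ?case by (rule reach_weaken) simp_all
qed

lemma run_init_counter: "reach learner (cfg0 4 L (concat (replicate T [2,2]) @ 1 # 1 # R)) (2 * T + 2)
   (cfg0 7 (sDn # sDn # rev (concat (replicate T [sU, sDn])) @ L) R)"
proof (induction T arbitrary: L)
  case 0
  have "reach learner (cfg0 4 L (1 # 1 # R)) 1 (cfg0 6 (sDn # L) (1 # R))"
    by (rule learner_step_Right[OF _ t4_1]) simp_all
  also have "reach learner (cfg0 6 (sDn # L) (1 # R)) 1 (cfg0 7 (sDn # sDn # L) R)"
    by (rule learner_step_Right[OF _ t6_1]) simp_all
  finally show ?case by (rule reach_weaken) simp_all
next
  case (Suc T)
  have "reach learner (cfg0 4 L (2 # 2 # concat (replicate T [2,2]) @ 1 # 1 # R)) 1 (cfg0 5 (sU # L) (2 # concat (replicate T [2,2]) @ 1 # 1 # R))"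
    by (rule learner_step_Right[OF _ t4_2]) simp_all
  also have "reach learner (cfg0 5 (sU # L) (2 # concat (replicate T [2,2]) @ 1 # 1 # R)) 1 (cfg0 4 (sDn # sU # L) (concat (replicate T [2,2]) @ 1 # 1 # R))"
    by (rule learner_step_Right[OF _ t5_2]) simp_all
  also note Suc[of "sDn # sU # L"]
  finally show ?case by (rule reach_weaken) simp_all
qed

lemma run_mark_samples_end: assumes "set Ss \<subseteq> {1,2}"
  shows "reach learner (cfg0 7 (sDn # L) Ss) (2 * length Ss + 3) (cfg0 9 (sDn # L) (Ss @ [sHs]))"
proof -
  have "reach learner (cfg0 7 (sDn # L) (Ss @ [])) (length Ss) (cfg0 7 (rev Ss @ sDn # L) [])"
    by (rule learner_scan_Right) (use assms in \<open>auto intro: t7_b\<close>)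
  also have "cfg0 7 (rev Ss @ sDn # L) [] = cfg0 7 (rev Ss @ sDn # L) [0]"
    by (simp add: cfg0_Nil_right)
  also have "reach learner (cfg0 7 (rev Ss @ sDn # L) [0]) (Suc (length Ss)) (cfg0 8 L (sDn # Ss @ sHs # []))"
    by (rule learner_turn_scan_Left[OF _ _ t7_0]) (use assms in \<open>auto intro: t8_b\<close>)
  also have "reach learner (cfg0 8 L (sDn # Ss @ sHs # [])) 1 (cfg0 9 (sDn # L) (Ss @ [sHs]))"
    by (rule learner_step_Right[OF _ t8_Dn]) simp_all
  finally show ?thesis by (rule reach_weaken) simp_all
qed

lemma run_skip_pairs: "reach learner (cfg0 9 L (pair_syms xs @ 1 # R)) (2 * length xs) (cfg0 9 (rev (pair_syms xs) @ L) (1 # R))"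
proof (induction xs arbitrary: L)
  case Nil then show ?case by (simp add: reach_refl)
next
  case (Cons x xs)
  have "reach learner (cfg0 9 L (2 # sym_of_bit x # pair_syms xs @ 1 # R)) 1 (cfg0 10 (2 # L) (sym_of_bit x # pair_syms xs @ 1 # R))"
    by (rule learner_step_Right[OF _ t9_2]) simp_all
  also have "reach learner (cfg0 10 (2 # L) (sym_of_bit x # pair_syms xs @ 1 # R)) 1 (cfg0 9 (sym_of_bit x # 2 # L) (pair_syms xs @ 1 # R))"
    by (rule learner_step_Right[OF _ t10_b]) simp_all
  also note Cons[of "sym_of_bit x # 2 # L"]
  finally show ?case by (rule reach_weaken) simp_all
qed

definition d_syms :: "nat \<Rightarrow> nat list" where "d_syms d = concat (replicate d [2,2]) @ [1]"

definition cursor_syms :: "bool list \<Rightarrow> nat \<Rightarrow> nat list" where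
  "cursor_syms s k = (if k < length s then pair_syms (take k s) @ sK2 # sym_of_bit (s ! k) # pair_syms (drop (Suc k) s) @ [1, 1]
              else pair_syms s @ [sK1, 1])"

definition pair_code_syms :: "bool list \<Rightarrow> nat \<Rightarrow> nat list" where
  "pair_code_syms s k = str_syms (take k s) @ str_syms [s ! k]"

lemma pair_syms_take_Suc: "k < length s \<Longrightarrow> pair_syms (take (Suc k) s) = pair_syms (take k s) @ [2, sym_of_bit (s ! k)]"
  by (simp add: take_Suc_conv_app_nth)

lemma pair_syms_drop_nth: "k < length s \<Longrightarrow> pair_syms (drop k s) = 2 # sym_of_bit (s ! k) # pair_syms (drop (Suc k) s)"
  by (simp add: Cons_nth_drop_Suc[symmetric])

lemma run_move_cursor: assumes k: "k < length s"
  shows "reach learner (cfg0 12 L (cursor_syms s (Suc k) @ R)) (2 * k + 3)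
    (cfg0 13 (2 # rev (pair_syms (take k s)) @ L) (sym_of_bit (s ! k) # pair_syms (drop (Suc k) s) @ 1 # 1 # R))"
proof -
  define Kp where "Kp = (if Suc k < length s then sK2 # sym_of_bit (s ! Suc k) # pair_syms (drop (Suc (Suc k)) s) @ [1, 1] else [sK1, 1])"
  have cursor_syms: "cursor_syms s (Suc k) = pair_syms (take k s) @ [2, sym_of_bit (s ! k)] @ Kp"
  proof (cases "Suc k < length s")
    case False
    then have "take (Suc k) s = s" using k by simp
    then show ?thesis using k False pair_syms_take_Suc[OF k] by (auto simp: cursor_syms_def Kp_def)
  qed (use k in \<open>auto simp: cursor_syms_def Kp_def pair_syms_take_Suc\<close>)
  have "reach learner (cfg0 12 L ((pair_syms (take k s) @ [2, sym_of_bit (s ! k)]) @ Kp @ R)) (2 * k + 2)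
     (cfg0 12 (rev (pair_syms (take k s) @ [2, sym_of_bit (s ! k)]) @ L) (Kp @ R))"
    by (rule learner_scan_Right) (use k set_pair_syms in \<open>auto intro!: t12_skip\<close>)
  moreover have "reach learner (cfg0 12 (rev (pair_syms (take k s) @ [2, sym_of_bit (s ! k)]) @ L) (Kp @ R)) 1
    (cfg0 13 (2 # rev (pair_syms (take k s)) @ L) (sym_of_bit (s ! k) # pair_syms (drop (Suc k) s) @ 1 # 1 # R))"
  proof (cases "Suc k < length s")
    case True
    then show ?thesis unfolding Kp_def
      by (simp add: pair_syms_drop_nth) (rule learner_step_Left[OF _ t12_K2], simp_all)
  next
    case False
    then have "drop (Suc k) s = []" by simp
    then show ?thesis using False unfolding Kp_def
      by simp (rule learner_step_Left[OF _ t12_K1], simp_all)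
  qed
  ultimately show ?thesis using cursor_syms by (auto dest: reach_trans intro: reach_weaken)
qed

lemma run_copy_symbol:
  assumes bk: "set bk \<subseteq> {1,2}" and W: "set W \<subseteq> {1,2,sK2,sHs}" and i: "i < length bk"
  shows "reach learner (cfg0 16 (rev (P @ map marked (take i bk))) (drop i bk @ W @ take i bk))
     (2 * (length bk + length W) + 4)
     (cfg0 16 (rev (P @ map marked (take (Suc i) bk))) (drop (Suc i) bk @ W @ take (Suc i) bk))"
proof -
  define x where "x = bk ! i"
  define xs where "xs = drop (Suc i) bk @ W @ take i bk"
  have x: "x \<in> {1,2}" using bk i unfolding x_def by (auto dest: nth_mem)
  have xs: "set xs \<subseteq> {1,2,sK2,sHs}" using bk W unfolding xs_def
    by (auto dest: in_set_dropD in_set_takeD)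
  have lxs: "length xs < length bk + length W" using i unfolding xs_def by simp
  have d: "drop i bk @ W @ take i bk = x # xs" unfolding x_def xs_def using i
    by (simp add: Cons_nth_drop_Suc)
  have "reach learner (cfg0 16 (rev (P @ map marked (take i bk))) (x # xs)) 1
      (cfg0 (16 + x) (marked x # rev (P @ map marked (take i bk))) xs)"
    using learner_step_Right[OF _ t16_b[OF x], of 1 "rev (P @ map marked (take i bk))" xs] by simp
  also have "reach learner (cfg0 (16 + x) (marked x # rev (P @ map marked (take i bk))) xs) (length xs)
      (cfg0 (16 + x) (rev xs @ marked x # rev (P @ map marked (take i bk))) [])"
  proof -
    have "reach learner (cfg0 (16 + x) (marked x # rev (P @ map marked (take i bk))) (xs @ [])) (length xs)
      (cfg0 (16 + x) (rev xs @ marked x # rev (P @ map marked (take i bk))) [])"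
      by (rule learner_scan_Right) (use xs x in \<open>auto intro!: t17_skip\<close>)
    then show ?thesis by simp
  qed
  also have "cfg0 (16 + x) (rev xs @ marked x # rev (P @ map marked (take i bk))) [] =
     cfg0 (16 + x) (rev xs @ marked x # rev (P @ map marked (take i bk))) [0]" by (rule cfg0_Nil_right)
  also have "reach learner (cfg0 (16 + x) (rev xs @ marked x # rev (P @ map marked (take i bk))) [0]) (Suc (length xs))
      (cfg0 15 (rev (P @ map marked (take i bk))) (marked x # xs @ x # []))"
    by (rule learner_turn_scan_Left[OF _ _ t17_0[OF x]]) (use xs x in \<open>auto intro!: t15_skip\<close>)
  also have "reach learner (cfg0 15 (rev (P @ map marked (take i bk))) (marked x # xs @ x # [])) 1
      (cfg0 16 (marked x # rev (P @ map marked (take i bk))) (xs @ [x]))"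
    by (rule learner_step_Right[OF _ t15_marked[OF x]]) simp_all
  finally have r: "reach learner (cfg0 16 (rev (P @ map marked (take i bk))) (x # xs)) (1 + length xs + Suc (length xs) + 1)
      (cfg0 16 (marked x # rev (P @ map marked (take i bk))) (xs @ [x]))" .
  have e1: "marked x # rev (P @ map marked (take i bk)) = rev (P @ map marked (take (Suc i) bk))"
    using i by (simp add: take_Suc_conv_app_nth x_def)
  have e2: "xs @ [x] = drop (Suc i) bk @ W @ take (Suc i) bk"
    using i by (simp add: take_Suc_conv_app_nth x_def xs_def)
  show ?thesis using r unfolding d e1 e2 by (rule reach_weaken) (use lxs in simp_all)
qed

lemma run_copy_prefix:
  assumes bk: "set bk \<subseteq> {1,2}" and W: "set W \<subseteq> {1,2,sK2,sHs}" and i: "i \<le> length bk"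
  shows "reach learner (cfg0 16 (rev (P @ map marked (take i bk))) (drop i bk @ W @ take i bk))
     ((length bk - i) * (2 * (length bk + length W) + 4))
     (cfg0 16 (rev (P @ map marked bk)) (W @ bk))"
  using i
proof (induction "length bk - i" arbitrary: i)
  case 0
  then have "i = length bk" by simp
  then show ?case by (simp add: reach_refl)
next
  case (Suc n)
  then have i: "i < length bk" by simp
  have "reach learner (cfg0 16 (rev (P @ map marked (take i bk))) (drop i bk @ W @ take i bk))
     (2 * (length bk + length W) + 4 + n * (2 * (length bk + length W) + 4))
     (cfg0 16 (rev (P @ map marked bk)) (W @ bk))"
  proof (rule reach_trans[OF run_copy_symbol[OF bk W i]])
    have "n = length bk - Suc i" using Suc.hyps(2) by simp
    then show "reach learner (cfg0 16 (rev (P @ map marked (take (Suc i) bk))) (drop (Suc i) bk @ W @ take (Suc i) bk))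
      (n * (2 * (length bk + length W) + 4)) (cfg0 16 (rev (P @ map marked bk)) (W @ bk))"
      using Suc.hyps(1)[of "Suc i"] i by simp
  qed
  then show ?case by (rule reach_weaken) (simp_all add: Suc(2)[symmetric])
qed

lemma map_unmarked_marked: "set bk \<subseteq> {1,2} \<Longrightarrow> map unmarked (map marked bk) = bk"
  by (induction bk) auto

lemma map_comp_unmarked_marked: "set bk \<subseteq> {1,2} \<Longrightarrow> map (unmarked \<circ> marked) bk = bk"
  using map_unmarked_marked by simp

lemma run_append_code:
  assumes bk: "set bk \<subseteq> {1,2}" and b: "b \<in> {1,2}" and Z: "set Z \<subseteq> {1,2,sHs}"
  shows "reach learner (cfg0 16 (rev (P0 @ sDn # map marked bk)) (sK2 # b # Z))
     (2 * length Z + length bk + 15)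
     (cfg0 31 (rev P0) (sDn # bk @ sK2 # b # Z @ [1,1,2,b,1,1]))"
proof -
  let ?L = "rev (P0 @ sDn # map marked bk)"
  have "reach learner (cfg0 16 ?L (sK2 # b # Z)) 1 (cfg0 19 (sK2 # ?L) (b # Z))"
    by (rule learner_step_Right[OF _ t16_K2]) simp_all
  also have "reach learner (cfg0 19 (sK2 # ?L) (b # Z)) 1 (cfg0 (16 + 4 * b) (b # sK2 # ?L) Z)"
    by (rule learner_step_Right[OF _ t19[OF b]]) (use b in auto)
  also have "reach learner (cfg0 (16 + 4 * b) (b # sK2 # ?L) Z) (length Z) (cfg0 (16 + 4 * b) (rev Z @ b # sK2 # ?L) [0])"
  proof -
    have "reach learner (cfg0 (16 + 4 * b) (b # sK2 # ?L) (Z @ [])) (length Z) (cfg0 (16 + 4 * b) (rev Z @ b # sK2 # ?L) [])"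
      by (rule learner_scan_Right) (use b Z in \<open>auto intro!: ta0_skip\<close>)
    then show ?thesis by (simp add: cfg0_Nil_right)
  qed
  also have "reach learner (cfg0 (16 + 4 * b) (rev Z @ b # sK2 # ?L) [0]) 1 (cfg0 (17 + 4 * b) (1 # rev Z @ b # sK2 # ?L) [0])"
    using learner_step_Right[OF _ ta0_0[OF b], of 1 "rev Z @ b # sK2 # ?L" "[]"] b by (auto simp: cfg0_Nil_right)
  also have "reach learner (cfg0 (17 + 4 * b) (1 # rev Z @ b # sK2 # ?L) [0]) 1 (cfg0 (18 + 4 * b) (1 # 1 # rev Z @ b # sK2 # ?L) [0])"
    using learner_step_Right[OF _ ta1[OF b], of 1 "1 # rev Z @ b # sK2 # ?L" "[]"] b by (auto simp: cfg0_Nil_right)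
  also have "reach learner (cfg0 (18 + 4 * b) (1 # 1 # rev Z @ b # sK2 # ?L) [0]) 1 (cfg0 (19 + 4 * b) (2 # 1 # 1 # rev Z @ b # sK2 # ?L) [0])"
    using learner_step_Right[OF _ ta2[OF b], of 1 "1 # 1 # rev Z @ b # sK2 # ?L" "[]"] b by (auto simp: cfg0_Nil_right)
  also have "reach learner (cfg0 (19 + 4 * b) (2 # 1 # 1 # rev Z @ b # sK2 # ?L) [0]) 1 (cfg0 28 (b # 2 # 1 # 1 # rev Z @ b # sK2 # ?L) [0])"
    using learner_step_Right[OF _ ta3[OF b], of 1 "2 # 1 # 1 # rev Z @ b # sK2 # ?L" "[]"] b by (auto simp: cfg0_Nil_right)
  also have "reach learner (cfg0 28 (b # 2 # 1 # 1 # rev Z @ b # sK2 # ?L) [0]) 1 (cfg0 29 (1 # b # 2 # 1 # 1 # rev Z @ b # sK2 # ?L) [0])"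
    using learner_step_Right[OF _ t28, of 1 "b # 2 # 1 # 1 # rev Z @ b # sK2 # ?L" "[]"] by (auto simp: cfg0_Nil_right)
  also have "cfg0 29 (1 # b # 2 # 1 # 1 # rev Z @ b # sK2 # ?L) [0] = cfg0 29 (rev (b # Z @ [1,1,2,b,1]) @ sK2 # ?L) [0]"
    by simp
  also have "reach learner (cfg0 29 (rev (b # Z @ [1,1,2,b,1]) @ sK2 # ?L) [0]) (Suc (length (b # Z @ [1,1,2,b,1])))
      (cfg0 30 ?L (sK2 # (b # Z @ [1,1,2,b,1]) @ 1 # []))"
    by (rule learner_turn_scan_Left[OF _ _ t29]) (use b Z in \<open>auto intro!: t30_skip\<close>)
  also have "?L = rev (map marked bk) @ sDn # rev P0" by simp
  also have "reach learner (cfg0 30 (rev (map marked bk) @ sDn # rev P0) (sK2 # (b # Z @ [1,1,2,b,1]) @ 1 # [])) (Suc (length (map marked bk)))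
     (cfg0 31 (rev P0) (sDn # map unmarked (map marked bk) @ sK2 # (b # Z @ [1,1,2,b,1]) @ 1 # []))"
    by (rule learner_turn_walk_Left[OF _ _ t30_K2]) (use bk in \<open>auto intro!: t31_marked\<close>)
  finally show ?thesis by (rule reach_weaken) (use bk in \<open>simp_all add: map_unmarked_marked map_comp_unmarked_marked\<close>)
qed

lemma run_copy_and_append:
  assumes bk: "set bk \<subseteq> {1,2}" and b: "b \<in> {1,2}" and Y: "set Y \<subseteq> {1,2,sHs}"
  shows "reach learner (cfg0 15 (rev P0) (sDn # bk @ sK2 # b # Y))
      (1 + length bk * (2 * (length bk + length Y) + 8) + (2 * length Y + 3 * length bk + 15))
      (cfg0 31 (rev P0) (sDn # bk @ sK2 # b # (Y @ bk) @ [1,1,2,b,1,1]))"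
proof -
  have "reach learner (cfg0 15 (rev P0) (sDn # bk @ sK2 # b # Y)) 1 (cfg0 16 (sDn # rev P0) (bk @ sK2 # b # Y))"
    by (rule learner_step_Right[OF _ t15_stop]) simp_all
  also have "cfg0 16 (sDn # rev P0) (bk @ sK2 # b # Y) =
     cfg0 16 (rev ((P0 @ [sDn]) @ map marked (take 0 bk))) (drop 0 bk @ (sK2 # b # Y) @ take 0 bk)" by simp
  also have "reach learner (cfg0 16 (rev ((P0 @ [sDn]) @ map marked (take 0 bk))) (drop 0 bk @ (sK2 # b # Y) @ take 0 bk))
     ((length bk - 0) * (2 * (length bk + length (sK2 # b # Y)) + 4))
     (cfg0 16 (rev ((P0 @ [sDn]) @ map marked bk)) ((sK2 # b # Y) @ bk))"
    by (rule run_copy_prefix) (use bk b Y in auto)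
  also have "cfg0 16 (rev ((P0 @ [sDn]) @ map marked bk)) ((sK2 # b # Y) @ bk)
      = cfg0 16 (rev (P0 @ sDn # map marked bk)) (sK2 # b # (Y @ bk))"
    by simp
  also have "reach learner (cfg0 16 (rev (P0 @ sDn # map marked bk)) (sK2 # b # (Y @ bk))) (2 * length (Y @ bk) + length bk + 15)
     (cfg0 31 (rev P0) (sDn # bk @ sK2 # b # (Y @ bk) @ [1,1,2,b,1,1]))"
    by (rule run_append_code) (use bk b Y in auto)
  finally show ?thesis by (rule reach_weaken) (simp_all add: algebra_simps)
qed

text \<open>Configuration at the start of an iteration: \<open>u\<close> counter units are unused and \<open>j\<close> used,
  \<open>nD + 2\<close> deleted cells precede the current sample.\<close>

definition counter_cfg :: "nat \<Rightarrow> nat \<Rightarrow> nat \<Rightarrow> nat \<Rightarrow> nat list \<Rightarrow> config" where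
  "counter_cfg d u j nD W = (case u of
      Suc u' \<Rightarrow> cfg0 11 (rev (d_syms d @ sE # concat (replicate u' [sU, sDn])))
                  (sU # sDn # concat (replicate j [sUp, sDn]) @ replicate (Suc (Suc nD)) sDn @ W)
    | 0 \<Rightarrow> cfg0 11 (rev (d_syms d)) (sE # concat (replicate j [sUp, sDn]) @ replicate (Suc (Suc nD)) sDn @ W))"

lemma run_return_to_counter:
  fixes d u j nD :: nat and W :: "nat list"
  defines "P0 \<equiv> d_syms d @ sE # concat (replicate u [sU, sDn]) @ sUp # sDn
                 # concat (replicate j [sUp, sDn]) @ replicate (Suc nD) sDn"
  shows "reach learner (cfg0 31 (rev P0) (sDn # W)) (2 * j + nD + 5) (counter_cfg d u (Suc j) nD W)"
proof (cases u)
  case 0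
  define ys where "ys = concat (replicate (Suc j) [sUp, sDn]) @ replicate (Suc nD) sDn"
  have "rev P0 = rev ys @ sE # rev (d_syms d)" unfolding P0_def ys_def 0 by simp
  moreover have "reach learner (cfg0 31 (rev ys @ sE # rev (d_syms d)) (sDn # W)) (Suc (length ys))
     (cfg0 11 (rev (d_syms d)) (sE # ys @ sDn # W))"
    by (rule learner_turn_scan_Left[OF _ _ t31_Dn])
       (use set_concat_replicate[of "Suc j" "[sUp, sDn]"] in \<open>auto simp: ys_def intro!: t11_skip\<close>)
  moreover have "Suc (length ys) \<le> 2 * j + nD + 5" unfolding ys_def by (simp add: length_concat sum_list_replicate)
  ultimately show ?thesis unfolding counter_cfg_def 0 ys_def
    by (auto elim!: reach_weaken simp: replicate_append_same replicate_app_Cons_same)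
next
  case (Suc u')
  define ys where "ys = sDn # concat (replicate (Suc j) [sUp, sDn]) @ replicate (Suc nD) sDn"
  have "rev P0 = rev ys @ sU # rev (d_syms d @ sE # concat (replicate u' [sU, sDn]))"
  proof -
    have "concat (replicate (Suc u') [sU, sDn]) = concat (replicate u' [sU, sDn]) @ [sU, sDn]"
      by (rule concat_replicate_snoc)
    then show ?thesis unfolding P0_def ys_def Suc by (simp add: replicate_append_same replicate_app_Cons_same)
  qed
  moreover have "reach learner (cfg0 31 (rev ys @ sU # rev (d_syms d @ sE # concat (replicate u' [sU, sDn]))) (sDn # W)) (Suc (length ys))
     (cfg0 11 (rev (d_syms d @ sE # concat (replicate u' [sU, sDn]))) (sU # ys @ sDn # W))"
    by (rule learner_turn_scan_Left[OF _ _ t31_Dn])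
       (use set_concat_replicate[of "Suc j" "[sUp, sDn]"] in \<open>auto simp: ys_def intro!: t11_skip\<close>)
  moreover have "Suc (length ys) \<le> 2 * j + nD + 5" unfolding ys_def by (simp add: length_concat sum_list_replicate)
  ultimately show ?thesis unfolding counter_cfg_def Suc ys_def
    by (auto elim!: reach_weaken simp: replicate_append_same replicate_app_Cons_same)
qed

lemma run_emit_pair:
  assumes k: "k < length s" and Rest: "set Rest \<subseteq> {1,2,sHs}"
    and N: "2 * (u + j) + nD + 2 * length s + length Rest + 4 * k + 8 \<le> N"
  shows "reach learner (counter_cfg d (Suc u) j nD (cursor_syms s (Suc k) @ Rest)) (3 * (N + 5) * (N + 5))
     (counter_cfg d u (Suc j) nD (cursor_syms s k @ Rest @ pair_code_syms s k))"
proof -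
  define LL where "LL = rev (d_syms d @ sE # concat (replicate u [sU, sDn]))"
  define X0 where "X0 = sDn # concat (replicate j [sUp, sDn]) @ replicate (Suc (Suc nD)) sDn"
  define P0 where "P0 = d_syms d @ sE # concat (replicate u [sU, sDn]) @ sUp # sDn # concat (replicate j [sUp, sDn]) @ replicate (Suc nD) sDn"
  define bk where "bk = pair_syms (take k s)"
  define b where "b = sym_of_bit (s ! k)"
  define Y where "Y = pair_syms (drop (Suc k) s) @ 1 # 1 # Rest"
  have bkS: "set bk \<subseteq> {1,2}" unfolding bk_def using set_pair_syms by blast
  have bS: "b \<in> {1,2}" unfolding b_def by simp
  have YS: "set Y \<subseteq> {1,2,sHs}" unfolding Y_def using set_pair_syms Rest by fastforce
  have lbk: "length bk = 2 * k" unfolding bk_def using k by simp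
  have lY: "length Y \<le> 2 * length s + 2 + length Rest" unfolding Y_def by simp
  have X0S: "set X0 \<subseteq> {1,2,sDn,sUp}" unfolding X0_def using set_concat_replicate[of j "[sUp, sDn]"] by auto
  have lX0: "length X0 = 2 * j + nD + 3" unfolding X0_def by (simp add: length_concat sum_list_replicate)
  have eP0: "rev X0 @ sUp # LL = sDn # rev P0" unfolding X0_def P0_def LL_def by (simp add: replicate_append_same)
  have "reach learner (counter_cfg d (Suc u) j nD (cursor_syms s (Suc k) @ Rest)) 1 (cfg0 12 (sUp # LL) (X0 @ cursor_syms s (Suc k) @ Rest))"
  proof -
    have "counter_cfg d (Suc u) j nD (cursor_syms s (Suc k) @ Rest) = cfg0 11 LL (sU # X0 @ cursor_syms s (Suc k) @ Rest)"
      by (simp add: counter_cfg_def LL_def X0_def)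
    then show ?thesis by (simp only:) (rule learner_step_Right[OF _ t11_U], simp_all)
  qed
  also have "reach learner (cfg0 12 (sUp # LL) (X0 @ cursor_syms s (Suc k) @ Rest)) (length X0) (cfg0 12 (rev X0 @ sUp # LL) (cursor_syms s (Suc k) @ Rest))"
    by (rule learner_scan_Right) (use X0S in \<open>auto intro!: t12_skip\<close>)
  also have "reach learner (cfg0 12 (rev X0 @ sUp # LL) (cursor_syms s (Suc k) @ Rest)) (2 * k + 3)
     (cfg0 13 (2 # rev bk @ rev X0 @ sUp # LL) (b # Y))"
    unfolding bk_def b_def Y_def by (rule run_move_cursor[OF k])
  also have "reach learner (cfg0 13 (2 # rev bk @ rev X0 @ sUp # LL) (b # Y)) 1 (cfg0 14 (rev bk @ rev X0 @ sUp # LL) (2 # b # Y))"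
    by (rule learner_step_Left[OF _ t13]) (use bS in simp_all)
  also have "rev bk @ rev X0 @ sUp # LL = rev bk @ sDn # rev P0" using eP0 by simp
  also have "reach learner (cfg0 14 (rev bk @ sDn # rev P0) (2 # b # Y)) (Suc (length bk)) (cfg0 15 (rev P0) (sDn # bk @ sK2 # b # Y))"
    by (rule learner_turn_scan_Left[OF _ _ t14]) (use bkS in \<open>auto intro!: t15_skip\<close>)
  also have "reach learner (cfg0 15 (rev P0) (sDn # bk @ sK2 # b # Y))
      (1 + length bk * (2 * (length bk + length Y) + 8) + (2 * length Y + 3 * length bk + 15))
      (cfg0 31 (rev P0) (sDn # bk @ sK2 # b # (Y @ bk) @ [1,1,2,b,1,1]))"
    by (rule run_copy_and_append[OF bkS bS YS])
  finally have r1: "reach learner (counter_cfg d (Suc u) j nD (cursor_syms s (Suc k) @ Rest))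
     (1 + length X0 + (2 * k + 3) + 1 + Suc (length bk)
      + (1 + length bk * (2 * (length bk + length Y) + 8) + (2 * length Y + 3 * length bk + 15)))
     (cfg0 31 (rev P0) (sDn # bk @ sK2 # b # (Y @ bk) @ [1,1,2,b,1,1]))" .
  have e1: "cursor_syms s k @ Rest @ pair_code_syms s k = bk @ sK2 # b # (Y @ bk) @ [1,1,2,b,1,1]"
    using k unfolding cursor_syms_def pair_code_syms_def str_syms_def bk_def b_def Y_def by simp
  have r2: "reach learner (cfg0 31 (rev P0) (sDn # bk @ sK2 # b # (Y @ bk) @ [1,1,2,b,1,1])) (2 * j + nD + 5)
     (counter_cfg d u (Suc j) nD (cursor_syms s k @ Rest @ pair_code_syms s k))"
    unfolding e1 P0_def by (rule run_return_to_counter)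
  have bnd: "1 + length X0 + (2 * k + 3) + 1 + Suc (length bk)
      + (1 + length bk * (2 * (length bk + length Y) + 8) + (2 * length Y + 3 * length bk + 15))
      + (2 * j + nD + 5) \<le> 3 * (N + 5) * (N + 5)"
  proof -
    have a: "length bk + length Y \<le> N" "length X0 \<le> N" "2 * j + nD + 5 \<le> N + 5" "length bk \<le> N" "length Y \<le> N"
      using lbk lX0 N k unfolding Y_def by simp_all
    have c: "length bk * (2 * (length bk + length Y) + 8) \<le> N * (2 * N + 8)"
      using a by (intro mult_mono) auto
    have "1 + length X0 + (2 * k + 3) + 1 + Suc (length bk)
      + (1 + length bk * (2 * (length bk + length Y) + 8) + (2 * length Y + 3 * length bk + 15))
      + (2 * j + nD + 5) \<le> 2 * (N * N) + 30 * N + 40"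
      using a c lbk by (simp add: algebra_simps)
    also have "\<dots> \<le> 3 * (N + 5) * (N + 5)" by (simp add: algebra_simps)
    finally show ?thesis .
  qed
  show ?thesis using reach_trans[OF r1 r2] bnd by (rule reach_mono)
qed

primrec pairs_code_syms :: "bool list \<Rightarrow> nat \<Rightarrow> nat \<Rightarrow> nat list" where
  "pairs_code_syms s k 0 = []"
| "pairs_code_syms s k (Suc u) = pair_code_syms s (k - 1) @ pairs_code_syms s (k - 1) u"

lemma set_pairs_code_syms: "set (pairs_code_syms s k u) \<subseteq> {1,2}"
  by (induction u arbitrary: k) (use set_pair_syms in \<open>fastforce simp: pair_code_syms_def str_syms_def\<close>)+

lemma run_emit_pairs:
  assumes "u \<le> k" "k \<le> length s" "set Rest \<subseteq> {1,2,sHs}"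
    and "2 * (u + j) + nD + 2 * length s + length Rest + length (pairs_code_syms s k u) + 4 * k + 8 \<le> N"
  shows "reach learner (counter_cfg d u j nD (cursor_syms s k @ Rest)) (u * (3 * (N + 5) * (N + 5)))
     (counter_cfg d 0 (j + u) nD (cursor_syms s (k - u) @ Rest @ pairs_code_syms s k u))"
  using assms
proof (induction u arbitrary: j k Rest)
  case 0 then show ?case by (simp add: reach_refl)
next
  case (Suc u)
  then obtain k0 where k0: "k = Suc k0" by (cases k) auto
  have k0s: "k0 < length s" using Suc.prems k0 by simp
  have em: "pairs_code_syms s k (Suc u) = pair_code_syms s k0 @ pairs_code_syms s k0 u" using k0 by simp
  have R': "set (Rest @ pair_code_syms s k0) \<subseteq> {1,2,sHs}"
    using Suc.prems(3) set_pair_syms unfolding pair_code_syms_def str_syms_def by fastforce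
  have "reach learner (counter_cfg d (Suc u) j nD (cursor_syms s (Suc k0) @ Rest)) (3 * (N + 5) * (N + 5))
     (counter_cfg d u (Suc j) nD (cursor_syms s k0 @ Rest @ pair_code_syms s k0))"
    by (rule run_emit_pair[OF k0s Suc.prems(3)]) (use Suc.prems(4) k0 in simp)
  also have "reach learner (counter_cfg d u (Suc j) nD (cursor_syms s k0 @ Rest @ pair_code_syms s k0)) (u * (3 * (N + 5) * (N + 5)))
     (counter_cfg d 0 (Suc j + u) nD (cursor_syms s (k0 - u) @ (Rest @ pair_code_syms s k0) @ pairs_code_syms s k0 u))"
    using Suc.IH[of k0 "Rest @ pair_code_syms s k0" "Suc j"] Suc.prems k0 R' em by simp
  finally show ?case using k0 em by (elim reach_weaken) simp_all
qed

definition header_syms :: "nat \<Rightarrow> nat \<Rightarrow> nat \<Rightarrow> nat list" where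
  "header_syms d T nD = d_syms d @ sE # concat (replicate T [sU, sDn]) @ replicate (Suc (Suc nD)) sDn"

lemma run_enter_sample:
  assumes R: "set Rest \<subseteq> {1,2,sHs}"
  shows "reach learner (cfg0 9 (rev (header_syms d T nD)) (str_syms s @ Rest)) (4 * length s + nD + 4)
    (counter_cfg d T 0 nD (cursor_syms s (length s) @ Rest))"
proof -
  have "reach learner (cfg0 9 (rev (header_syms d T nD)) (pair_syms s @ 1 # (1 # Rest))) (2 * length s)
     (cfg0 9 (rev (pair_syms s) @ rev (header_syms d T nD)) (1 # (1 # Rest)))" by (rule run_skip_pairs)
  then have r1: "reach learner (cfg0 9 (rev (header_syms d T nD)) (str_syms s @ Rest)) (2 * length s)
     (cfg0 9 (rev (pair_syms s) @ rev (header_syms d T nD)) (1 # 1 # Rest))" by (simp add: str_syms_def)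
  have cs: "cursor_syms s (length s) = pair_syms s @ [sK1, 1]" by (simp add: cursor_syms_def)
  show ?thesis
  proof (cases T)
    case 0
    define ys where "ys = replicate (Suc (Suc nD)) sDn @ pair_syms s"
    have "rev (pair_syms s) @ rev (header_syms d T nD) = rev ys @ sE # rev (d_syms d)"
      unfolding ys_def header_syms_def 0 by simp
    moreover have "reach learner (cfg0 9 (rev ys @ sE # rev (d_syms d)) (1 # 1 # Rest)) (Suc (length ys))
       (cfg0 11 (rev (d_syms d)) (sE # ys @ sK1 # 1 # Rest))"
      by (rule learner_turn_scan_Left[OF _ _ t9_1]) (use set_pair_syms in \<open>auto simp: ys_def intro!: t11_skip\<close>)
    ultimately have r2: "reach learner (cfg0 9 (rev (pair_syms s) @ rev (header_syms d T nD)) (1 # 1 # Rest)) (Suc (length ys))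
       (cfg0 11 (rev (d_syms d)) (sE # ys @ sK1 # 1 # Rest))" by simp
    show ?thesis using reach_trans[OF r1 r2] unfolding counter_cfg_def 0 cs ys_def
      by (rule reach_weaken) simp_all
  next
    case (Suc T')
    define ys where "ys = sDn # replicate (Suc (Suc nD)) sDn @ pair_syms s"
    have "concat (replicate (Suc T') [sU, sDn]) = concat (replicate T' [sU, sDn]) @ [sU, sDn]"
      by (rule concat_replicate_snoc)
    then have "rev (pair_syms s) @ rev (header_syms d T nD) = rev ys @ sU # rev (d_syms d @ sE # concat (replicate T' [sU, sDn]))"
      unfolding ys_def header_syms_def Suc by simp
    moreover have "reach learner (cfg0 9 (rev ys @ sU # rev (d_syms d @ sE # concat (replicate T' [sU, sDn]))) (1 # 1 # Rest)) (Suc (length ys))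
       (cfg0 11 (rev (d_syms d @ sE # concat (replicate T' [sU, sDn]))) (sU # ys @ sK1 # 1 # Rest))"
      by (rule learner_turn_scan_Left[OF _ _ t9_1]) (use set_pair_syms in \<open>auto simp: ys_def intro!: t11_skip\<close>)
    ultimately have r2: "reach learner (cfg0 9 (rev (pair_syms s) @ rev (header_syms d T nD)) (1 # 1 # Rest)) (Suc (length ys))
       (cfg0 11 (rev (d_syms d @ sE # concat (replicate T' [sU, sDn]))) (sU # ys @ sK1 # 1 # Rest))" by simp
    show ?thesis using reach_trans[OF r1 r2] unfolding counter_cfg_def Suc cs ys_def
      by (rule reach_weaken) simp_all
  qed
qed

lemma run_erase_pairs:
  assumes "\<forall>(a, b)\<in>set ps. a \<in> {2, sK2} \<and> b \<in> {1,2}" "t \<in> {1, sK1}"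
  shows "reach learner (cfg0 33 L (concat (map (\<lambda>(a, b). [a, b]) ps) @ t # 1 # R)) (2 * length ps + 2)
    (cfg0 9 (replicate (2 * length ps + 2) sDn @ L) R)"
  using assms(1)
proof (induction ps arbitrary: L)
  case Nil
  have "reach learner (cfg0 33 L (t # 1 # R)) 1 (cfg0 35 (sDn # L) (1 # R))"
    by (rule learner_step_Right[OF _ t33_1]) (use assms(2) in auto)
  also have "reach learner (cfg0 35 (sDn # L) (1 # R)) 1 (cfg0 9 (sDn # sDn # L) R)"
    by (rule learner_step_Right[OF _ t35]) simp_all
  finally show ?case by (rule reach_weaken) (simp_all add: numeral_2_eq_2)
next
  case (Cons p ps)
  obtain a b where p: "p = (a, b)" by (cases p)
  have ab: "a \<in> {2, sK2}" "b \<in> {1,2}" using Cons.prems p by auto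
  have "reach learner (cfg0 33 L (a # b # concat (map (\<lambda>(a, b). [a, b]) ps) @ t # 1 # R)) 1
     (cfg0 34 (sDn # L) (b # concat (map (\<lambda>(a, b). [a, b]) ps) @ t # 1 # R))"
    by (rule learner_step_Right[OF _ t33_2]) (use ab in auto)
  also have "reach learner (cfg0 34 (sDn # L) (b # concat (map (\<lambda>(a, b). [a, b]) ps) @ t # 1 # R)) 1
     (cfg0 33 (sDn # sDn # L) (concat (map (\<lambda>(a, b). [a, b]) ps) @ t # 1 # R))"
    by (rule learner_step_Right[OF _ t34]) (use ab in auto)
  also have "reach learner (cfg0 33 (sDn # sDn # L) (concat (map (\<lambda>(a, b). [a, b]) ps) @ t # 1 # R)) (2 * length ps + 2)
    (cfg0 9 (replicate (2 * length ps + 2) sDn @ sDn # sDn # L) R)"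
    using Cons by simp
  finally show ?case unfolding p by (rule reach_weaken) (simp_all add: replicate_app_Cons_same numeral_2_eq_2)
qed

lemma concat_pairs_pair_syms: "concat (map (\<lambda>(a, b). [a, b]) (map (\<lambda>x. (2, sym_of_bit x)) xs)) = pair_syms xs"
  by (induction xs) auto

lemma concat_comp_pairs_pair_syms: "concat (map ((\<lambda>(a, b). [a, b]) \<circ> (\<lambda>x. (2, sym_of_bit x))) xs) = pair_syms xs"
  by (induction xs) auto

lemma t32_g: "s \<in> {sUp, sDn} \<Longrightarrow> learner_delta 32 s = (32, if s = sUp then sU else s, Right)"
  using t32_Up t32_Dn by auto

lemma map_unmark: "map (\<lambda>x. if x = sUp then sU else x) (concat (replicate T [sUp, sDn])) = concat (replicate T [sU, sDn])"
  by (induction T) auto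

lemma cursor_syms_as_pairs: assumes "k \<le> length s"
  shows "\<exists>ps t. cursor_syms s k = concat (map (\<lambda>(a, b). [a, b]) ps) @ [t, 1] \<and> length ps = length s \<and>
     (\<forall>(a, b)\<in>set ps. a \<in> {2, sK2} \<and> b \<in> {1,2}) \<and> t \<in> {1, sK1}"
proof (cases "k < length s")
  case True
  define ps where "ps = map (\<lambda>x. (2::nat, sym_of_bit x)) (take k s) @ (sK2, sym_of_bit (s ! k)) # map (\<lambda>x. (2::nat, sym_of_bit x)) (drop (Suc k) s)"
  have "cursor_syms s k = concat (map (\<lambda>(a, b). [a, b]) ps) @ [1, 1]"
    using True unfolding ps_def cursor_syms_def by (simp add: concat_pairs_pair_syms concat_comp_pairs_pair_syms)
  moreover have "length ps = length s" using True unfolding ps_def by simp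
  moreover have "\<forall>(a, b)\<in>set ps. a \<in> {2, sK2} \<and> b \<in> {1,2}" unfolding ps_def by auto
  ultimately show ?thesis by blast
next
  case False
  define ps where "ps = map (\<lambda>x. (2::nat, sym_of_bit x)) s"
  have "cursor_syms s k = concat (map (\<lambda>(a, b). [a, b]) ps) @ [sK1, 1]"
    using False unfolding ps_def cursor_syms_def by (simp add: concat_pairs_pair_syms concat_comp_pairs_pair_syms)
  moreover have "length ps = length s" unfolding ps_def by simp
  moreover have "\<forall>(a, b)\<in>set ps. a \<in> {2, sK2} \<and> b \<in> {1,2}" unfolding ps_def by auto
  ultimately show ?thesis by blast
qed

lemma run_leave_sample:
  assumes k: "k \<le> length s"
  shows "reach learner (counter_cfg d 0 T nD (cursor_syms s k @ Rest)) (2 * T + nD + 2 * length s + 8)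
    (cfg0 9 (rev (header_syms d T (nD + length (str_syms s)))) Rest)"
proof -
  define g where "g = (\<lambda>x. if x = sUp then sU else x)"
  define xs where "xs = concat (replicate T [sUp, sDn]) @ replicate (Suc (Suc nD)) sDn"
  obtain ps t where ps: "cursor_syms s k = concat (map (\<lambda>(a, b). [a, b]) ps) @ [t, 1]" "length ps = length s"
     "\<forall>(a, b)\<in>set ps. a \<in> {2, sK2} \<and> b \<in> {1,2}" "t \<in> {1, sK1}"
    using cursor_syms_as_pairs[OF k] by blast
  define L' where "L' = rev (map g xs) @ sE # rev (d_syms d)"
  have mg: "map g xs = concat (replicate T [sU, sDn]) @ replicate (Suc (Suc nD)) sDn"
    unfolding g_def xs_def using map_unmark[of T] by simp
  have "reach learner (counter_cfg d 0 T nD (cursor_syms s k @ Rest)) (Suc (length xs)) (cfg0 32 L' (cursor_syms s k @ Rest))"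
  proof -
    have "reach learner (cfg0 11 (rev (d_syms d)) (sE # xs @ (cursor_syms s k @ Rest))) (Suc (length xs)) (cfg0 32 (rev (map g xs) @ sE # rev (d_syms d)) (cursor_syms s k @ Rest))"
    proof (rule learner_turn_walk_Right[OF _ _ t11_E])
      have "set xs \<subseteq> {sUp, sDn}" using set_concat_replicate[of T "[sUp, sDn]"] unfolding xs_def by auto
      then show "\<forall>s\<in>set xs. learner_delta 32 s = (32, g s, move.Right)" unfolding g_def using t32_g by blast
    qed simp_all
    then show ?thesis unfolding counter_cfg_def xs_def L'_def by simp
  qed
  also have "reach learner (cfg0 32 L' (cursor_syms s k @ Rest)) 1 (cfg0 33 L' (cursor_syms s k @ Rest))"
  proof (cases ps)
    case Nil
    then show ?thesis using ps by simp (rule learner_step_Stay[OF _ t32_stop], auto)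
  next
    case (Cons p ps')
    obtain a b where p: "p = (a, b)" by (cases p)
    then have "a \<in> {2, sK2}" using ps(3) Cons by auto
    then show ?thesis using ps Cons p by simp (rule learner_step_Stay[OF _ t32_stop], auto)
  qed
  also have "reach learner (cfg0 33 L' (cursor_syms s k @ Rest)) (2 * length ps + 2) (cfg0 9 (replicate (2 * length ps + 2) sDn @ L') Rest)"
    using run_erase_pairs[OF ps(3,4), of L' Rest] ps(1) by simp
  finally have r: "reach learner (counter_cfg d 0 T nD (cursor_syms s k @ Rest)) (Suc (length xs) + 1 + (2 * length ps + 2))
     (cfg0 9 (replicate (2 * length ps + 2) sDn @ L') Rest)" .
  have e: "replicate (2 * length ps + 2) sDn @ L' = rev (header_syms d T (nD + length (str_syms s)))"
    unfolding L'_def mg header_syms_def str_syms_def ps(2)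
    by (simp add: replicate_add[symmetric] replicate_app_Cons_same algebra_simps)
  have b: "Suc (length xs) + 1 + (2 * length ps + 2) \<le> 2 * T + nD + 2 * length s + 8"
    unfolding xs_def ps(2) by (simp add: length_concat sum_list_replicate)
  show ?thesis using r e b by (auto elim: reach_weaken)
qed

lemma run_process_sample:
  assumes T: "T \<le> length s" and R: "set Rest \<subseteq> {1,2,sHs}"
    and N: "2 * T + nD + 6 * length s + length Rest + length (pairs_code_syms s (length s) T) + 8 \<le> N"
  shows "reach learner (cfg0 9 (rev (header_syms d T nD)) (str_syms s @ Rest)) ((T + 1) * (3 * (N + 5) * (N + 5)))
     (cfg0 9 (rev (header_syms d T (nD + length (str_syms s)))) (Rest @ pairs_code_syms s (length s) T))"
proof -
  have "reach learner (cfg0 9 (rev (header_syms d T nD)) (str_syms s @ Rest)) (4 * length s + nD + 4) (counter_cfg d T 0 nD (cursor_syms s (length s) @ Rest))"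
    by (rule run_enter_sample[OF R])
  also have "reach learner (counter_cfg d T 0 nD (cursor_syms s (length s) @ Rest)) (T * (3 * (N + 5) * (N + 5)))
     (counter_cfg d 0 (0 + T) nD (cursor_syms s (length s - T) @ Rest @ pairs_code_syms s (length s) T))"
    by (rule run_emit_pairs) (use T R N in auto)
  also have "reach learner (counter_cfg d 0 (0 + T) nD (cursor_syms s (length s - T) @ Rest @ pairs_code_syms s (length s) T)) (2 * T + nD + 2 * length s + 8)
     (cfg0 9 (rev (header_syms d T (nD + length (str_syms s)))) (Rest @ pairs_code_syms s (length s) T))"
    using run_leave_sample[of "length s - T" s d T nD "Rest @ pairs_code_syms s (length s) T"] by simp
  finally show ?thesis
  proof (rule reach_mono)
    have "4 * length s + nD + 4 + (2 * T + nD + 2 * length s + 8) \<le> 3 * (N + 5) * (N + 5)"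
    proof -
      have "4 * length s + nD + 4 + (2 * T + nD + 2 * length s + 8) \<le> 2 * N + 12" using N by simp
      also have "\<dots> \<le> 3 * (N + 5) * (N + 5)" by (simp add: algebra_simps)
      finally show ?thesis .
    qed
    then show "4 * length s + nD + 4 + T * (3 * (N + 5) * (N + 5)) + (2 * T + nD + 2 * length s + 8)
      \<le> (T + 1) * (3 * (N + 5) * (N + 5))" by (simp add: algebra_simps)
  qed
qed

lemma length_str_syms[simp]: "length (str_syms xs) = 2 * length xs + 2" by (simp add: str_syms_def)

lemma length_header_syms: "length (header_syms d T nD) = length (d_syms d) + 2 * T + nD + 3"
  by (simp add: header_syms_def length_concat sum_list_replicate)

lemma run_process_samples:
  assumes "\<forall>s\<in>set S. T \<le> length s" and O: "set OUT \<subseteq> {1,2}"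
    and N: "3 * (length (header_syms d T nD) + length (concat (map str_syms S)) + length OUT
             + length (concat (map (\<lambda>s. pairs_code_syms s (length s) T) S)) + 1) + 8 \<le> N"
  shows "reach learner (cfg0 9 (rev (header_syms d T nD)) (concat (map str_syms S) @ sHs # OUT)) (length S * ((T + 1) * (3 * (N + 5) * (N + 5))))
     (cfg0 9 (rev (header_syms d T (nD + length (concat (map str_syms S))))) (sHs # OUT @ concat (map (\<lambda>s. pairs_code_syms s (length s) T) S)))"
  using assms
proof (induction S arbitrary: nD OUT)
  case Nil then show ?case by (simp add: reach_refl)
next
  case (Cons s S)
  have Ts: "T \<le> length s" using Cons.prems by simp
  have R: "set (concat (map str_syms S) @ sHs # OUT) \<subseteq> {1,2,sHs}"
  proof -
    have "\<forall>x \<in> set (concat (map str_syms S)). x \<in> {1,2}" by (auto simp: str_syms_def dest: mem_pair_syms)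
    then show ?thesis using Cons.prems(2) by auto
  qed
  have O': "set (OUT @ pairs_code_syms s (length s) T) \<subseteq> {1,2}"
    using Cons.prems(2) set_pairs_code_syms by auto
  have "reach learner (cfg0 9 (rev (header_syms d T nD)) (str_syms s @ (concat (map str_syms S) @ sHs # OUT))) ((T + 1) * (3 * (N + 5) * (N + 5)))
     (cfg0 9 (rev (header_syms d T (nD + length (str_syms s)))) ((concat (map str_syms S) @ sHs # OUT) @ pairs_code_syms s (length s) T))"
    by (rule run_process_sample[OF Ts R]) (use Cons.prems(3) in \<open>simp add: length_header_syms\<close>)
  also have "(concat (map str_syms S) @ sHs # OUT) @ pairs_code_syms s (length s) T = concat (map str_syms S) @ sHs # (OUT @ pairs_code_syms s (length s) T)"
    by simp
  also have "reach learner (cfg0 9 (rev (header_syms d T (nD + length (str_syms s)))) (concat (map str_syms S) @ sHs # (OUT @ pairs_code_syms s (length s) T)))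
     (length S * ((T + 1) * (3 * (N + 5) * (N + 5))))
     (cfg0 9 (rev (header_syms d T (nD + length (str_syms s) + length (concat (map str_syms S))))) (sHs # (OUT @ pairs_code_syms s (length s) T) @ concat (map (\<lambda>s. pairs_code_syms s (length s) T) S)))"
    by (rule Cons.IH) (use Cons.prems O' in \<open>simp_all add: length_header_syms\<close>)
  finally show ?case by (rule reach_weaken) (simp_all add: algebra_simps)
qed

lemma run_shift_carry:
  assumes "x \<le> 2" "set w \<subseteq> {1,2}" "y \<in> {1,2}"
  shows "reach learner (cfg0 (37 + x) (rev w @ g # L) (y # R)) (Suc (length w))
    (cfg0 (37 + hd (w @ [y])) L (g # tl (w @ [y]) @ x # R))"
  using assms
proof (induction w arbitrary: x y R rule: rev_induct)
  case Nil
  then show ?case by simp (rule learner_step_Left[OF _ t37_b], auto)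
next
  case (snoc y' w)
  have "reach learner (cfg0 (37 + x) (y' # rev w @ g # L) (y # R)) 1 (cfg0 (37 + y) (rev w @ g # L) (y' # x # R))"
    by (rule learner_step_Left[OF _ t37_b]) (use snoc.prems in auto)
  also have "reach learner (cfg0 (37 + y) (rev w @ g # L) (y' # x # R)) (Suc (length w))
     (cfg0 (37 + hd (w @ [y'])) L (g # tl (w @ [y']) @ y # x # R))"
    by (rule snoc.IH) (use snoc.prems in auto)
  finally show ?case by (rule reach_weaken) (cases w; simp)+
qed

lemma run_shift_cell:
  assumes w: "set w \<subseteq> {1,2}" and g: "g \<in> {sU, sDn, sHs}"
  shows "reach learner (cfg0 36 (rev w @ g # c # L0) (0 # R)) (length w + 2) (cfg0 40 L0 (c # w @ 0 # 0 # R))"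
proof (cases w rule: rev_cases)
  case Nil
  have "reach learner (cfg0 36 (g # c # L0) (0 # R)) 1 (cfg0 37 (c # L0) (g # 0 # R))"
    by (rule learner_step_Left[OF _ t36_0]) simp_all
  also have "reach learner (cfg0 37 (c # L0) (g # 0 # R)) 1 (cfg0 40 L0 (c # 0 # 0 # R))"
    using learner_step_Left[OF _ t37_g[of 0 g], of 1 c L0 "0 # R"] g by simp
  finally show ?thesis by (rule reach_weaken) (use Nil in simp_all)
next
  case (snoc w0 y)
  have y: "y \<in> {1,2}" and w0: "set w0 \<subseteq> {1,2}" using w snoc by auto
  have hw: "hd w \<le> 2" using w snoc by (cases w0) auto
  have "reach learner (cfg0 36 (y # rev w0 @ g # c # L0) (0 # R)) 1 (cfg0 37 (rev w0 @ g # c # L0) (y # 0 # R))"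
    by (rule learner_step_Left[OF _ t36_0]) simp_all
  also have "reach learner (cfg0 37 (rev w0 @ g # c # L0) (y # 0 # R)) (Suc (length w0))
     (cfg0 (37 + hd (w0 @ [y])) (c # L0) (g # tl (w0 @ [y]) @ 0 # 0 # R))"
    using run_shift_carry[of 0 w0 y g "c # L0" "0 # R"] w0 y by simp
  also have "reach learner (cfg0 (37 + hd (w0 @ [y])) (c # L0) (g # tl (w0 @ [y]) @ 0 # 0 # R)) 1
     (cfg0 40 L0 (c # hd (w0 @ [y]) # tl (w0 @ [y]) @ 0 # 0 # R))"
    by (rule learner_step_Left[OF _ t37_g]) (use hw snoc g in auto)
  finally show ?thesis by (rule reach_weaken) (use snoc in \<open>cases w0; simp\<close>)+
qed

lemma run_compact:
  assumes "set gp \<subseteq> {sU, sDn, sHs}" "gp \<noteq> []" and O: "set OUT \<subseteq> {1,2}"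
  shows "\<exists>z'. reach learner (cfg0 36 (rev gp @ sE # rev (d_syms d)) (OUT @ 0 # replicate z 0)) (length gp * (2 * length OUT + 4))
     (cfg0 41 (rev (concat (replicate d [2,2]))) (1 # 1 # OUT @ replicate z' 0))"
  using assms(1,2)
proof (induction gp arbitrary: z rule: rev_induct)
  case Nil then show ?case by simp
next
  case (snoc g gp0)
  have g: "g \<in> {sU, sDn, sHs}" using snoc.prems by simp
  have w: "reach learner (cfg0 36 (rev (gp0 @ [g]) @ sE # rev (d_syms d)) (OUT @ 0 # replicate z 0)) (length OUT)
      (cfg0 36 (rev OUT @ g # rev gp0 @ sE # rev (d_syms d)) (0 # replicate z 0))"
  proof -
    have "reach learner (cfg0 36 (rev (gp0 @ [g]) @ sE # rev (d_syms d)) (OUT @ (0 # replicate z 0))) (length OUT)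
      (cfg0 36 (rev OUT @ (rev (gp0 @ [g]) @ sE # rev (d_syms d))) (0 # replicate z 0))"
      by (rule learner_scan_Right) (use O in \<open>auto intro!: t36_skip\<close>)
    then show ?thesis by simp
  qed
  show ?case
  proof (cases gp0 rule: rev_cases)
    case Nil
    have "reach learner (cfg0 36 (rev OUT @ g # sE # rev (d_syms d)) (0 # replicate z 0)) (length OUT + 2)
      (cfg0 40 (rev (d_syms d)) (sE # OUT @ 0 # 0 # replicate z 0))"
      by (rule run_shift_cell[OF O g])
    also have "reach learner (cfg0 40 (rev (d_syms d)) (sE # OUT @ 0 # 0 # replicate z 0)) 1
      (cfg0 41 (rev (concat (replicate d [2,2]))) (1 # 1 # OUT @ 0 # 0 # replicate z 0))"
      unfolding d_syms_def by simp (rule learner_step_Left[OF _ t40_E], simp_all)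
    finally have r: "reach learner (cfg0 36 (rev OUT @ g # sE # rev (d_syms d)) (0 # replicate z 0)) (length OUT + 2 + 1)
      (cfg0 41 (rev (concat (replicate d [2,2]))) (1 # 1 # OUT @ replicate (Suc (Suc z)) 0))" by simp
    show ?thesis using reach_trans[OF w[unfolded Nil, simplified] r] Nil by (intro exI[of _ "Suc (Suc z)"]) (auto elim!: reach_weaken)
  next
    case (snoc gp1 c)
    have c: "c \<in> {sU, sDn, sHs}" using snoc.prems \<open>gp0 = gp1 @ [c]\<close> by simp
    have "reach learner (cfg0 36 (rev OUT @ g # c # rev gp1 @ sE # rev (d_syms d)) (0 # replicate z 0)) (length OUT + 2)
      (cfg0 40 (rev gp1 @ sE # rev (d_syms d)) (c # OUT @ 0 # 0 # replicate z 0))"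
      by (rule run_shift_cell[OF O g])
    also have "reach learner (cfg0 40 (rev gp1 @ sE # rev (d_syms d)) (c # OUT @ 0 # 0 # replicate z 0)) 1
      (cfg0 36 (rev gp0 @ sE # rev (d_syms d)) (OUT @ 0 # replicate (Suc z) 0))"
      using learner_step_Right[OF _ t40_g[OF c], of 1 "rev gp1 @ sE # rev (d_syms d)" "OUT @ 0 # 0 # replicate z 0"] snoc by simp
    finally have r: "reach learner (cfg0 36 (rev OUT @ g # rev gp0 @ sE # rev (d_syms d)) (0 # replicate z 0)) (length OUT + 2 + 1)
      (cfg0 36 (rev gp0 @ sE # rev (d_syms d)) (OUT @ 0 # replicate (Suc z) 0))" using snoc by simp
    obtain z' where r2: "reach learner (cfg0 36 (rev gp0 @ sE # rev (d_syms d)) (OUT @ 0 # replicate (Suc z) 0)) (length gp0 * (2 * length OUT + 4))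
     (cfg0 41 (rev (concat (replicate d [2,2]))) (1 # 1 # OUT @ replicate z' 0))"
      using snoc.IH[of "Suc z"] snoc.prems \<open>gp0 = gp1 @ [c]\<close> by auto
    show ?thesis using reach_trans[OF reach_trans[OF w r] r2] by (auto intro!: exI elim!: reach_weaken simp: algebra_simps)
  qed
qed

lemma run_rewind:
  "reach learner (cfg0 41 (rev (concat (replicate d [2,2]))) (1 # R)) (2 * d + 2) (cfg0 42 [] (concat (replicate d [2,2]) @ 1 # R))"
proof -
  define X where "X = concat (replicate d [2::nat, 2])"
  have lX: "length X = 2 * d" unfolding X_def by (simp add: length_concat sum_list_replicate)
  have XS: "set X \<subseteq> {2}" unfolding X_def using set_concat_replicate[of d "[2::nat, 2]"] by auto
  have "cfg0 41 (rev X) (1 # R) = cfg 41 (int (length X)) (rev X @ [0]) (1 # R)"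
    unfolding cfg0_def by (simp add: cfg_left_blank)
  also have "reach learner (cfg 41 (int (length X)) (rev X @ [0]) (1 # R)) (Suc (length X))
     (cfg 41 (int (length X) - int (Suc (length X))) [] (0 # map id X @ id 1 # R))"
    by (rule reach_walk_Left[where \<delta>=learner_delta and g=id and q=41 and y=1 and ys=X and B="Suc (length X)" and p="int (length X)" and z=0 and L="[]" and R=R])
       (use XS in \<open>auto intro!: t41_b\<close>)
  also have "cfg 41 (int (length X) - int (Suc (length X))) [] (0 # map id X @ id 1 # R) = cfg 41 (-1) [] (0 # X @ 1 # R)"
    by simp
  also have "reach learner (cfg 41 (-1) [] (0 # X @ 1 # R)) 1 (cfg 42 0 [0] (X @ 1 # R))"
    using reach_step_Right[where \<delta>=learner_delta and B=1 and p="-1" and L="[]" and R="X @ 1 # R", OF _ t41_0] by simp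
  also have "cfg 42 0 [0] (X @ 1 # R) = cfg0 42 [] (X @ 1 # R)"
    unfolding cfg0_def using cfg_left_blank[of 42 0 "[]" "X @ 1 # R"] by simp
  finally show ?thesis unfolding X_def by (rule reach_weaken) (simp_all add: lX[unfolded X_def])
qed

lemma pair_syms_replicate_True: "pair_syms (replicate n True) = concat (replicate n [2,2])"
  by (induction n) (auto simp: sym_of_bit_def)

lemma map_sym_enc_learn: "map sym_of_bit (enc_learn d T S) =
   concat (replicate d [2,2]) @ 1 # 1 # concat (replicate T [2,2]) @ 1 # 1 # concat (map str_syms S)"
proof -
  have e: "str_syms (replicate n True) = concat (replicate n [2,2]) @ [1,1]" for n
    by (simp add: str_syms_def pair_syms_replicate_True)
  show ?thesis by (simp add: enc_learn_def enc_nat_def map_sym_enc_str map_concat e comp_def)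
qed

lemma run_read_header:
  "reach learner (tm_init (enc_learn d T S)) (2 * d + 2 * T + 2 * length (concat (map str_syms S)) + 7)
     (cfg0 9 (rev (header_syms d T 0)) (concat (map str_syms S) @ [sHs]))"
proof -
  define Ss where "Ss = concat (map str_syms S)"
  define X where "X = concat (replicate d [2::nat, 2])"
  have SsS: "set Ss \<subseteq> {1,2}" unfolding Ss_def by (auto simp: str_syms_def dest: mem_pair_syms)
  have "reach learner (tm_init (enc_learn d T S)) (2 * d + 2)
      (cfg0 4 (sE # 1 # rev X @ []) (concat (replicate T [2,2]) @ 1 # 1 # Ss))"
    unfolding tm_init_eq_cfg0 map_sym_enc_learn X_def Ss_def by (rule run_skip_d)
  also have "reach learner (cfg0 4 (sE # 1 # rev X @ []) (concat (replicate T [2,2]) @ 1 # 1 # Ss)) (2 * T + 2)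
      (cfg0 7 (sDn # sDn # rev (concat (replicate T [sU, sDn])) @ sE # 1 # rev X @ []) Ss)"
    by (rule run_init_counter)
  also have "reach learner (cfg0 7 (sDn # sDn # rev (concat (replicate T [sU, sDn])) @ sE # 1 # rev X @ []) Ss)
      (2 * length Ss + 3) (cfg0 9 (sDn # sDn # rev (concat (replicate T [sU, sDn])) @ sE # 1 # rev X @ []) (Ss @ [sHs]))"
    by (rule run_mark_samples_end[OF SsS])
  also have "cfg0 9 (sDn # sDn # rev (concat (replicate T [sU, sDn])) @ sE # 1 # rev X @ []) (Ss @ [sHs])
     = cfg0 9 (rev (header_syms d T 0)) (Ss @ [sHs])"
    unfolding header_syms_def d_syms_def X_def by simp
  finally show ?thesis unfolding Ss_def by (rule reach_weaken) simp_all
qed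

lemma run_compact_and_rewind:
  assumes "set gp \<subseteq> {sU, sDn, sHs}" "gp \<noteq> []" and O: "set OUT \<subseteq> {1,2}"
  shows "reach learner (cfg0 36 (rev gp @ sE # rev (d_syms d)) OUT) (length gp * (2 * length OUT + 4) + (2 * d + 2))
     (cfg0 42 [] (str_syms (replicate d True) @ OUT))"
proof -
  obtain z' where "reach learner (cfg0 36 (rev gp @ sE # rev (d_syms d)) (OUT @ 0 # replicate 0 0))
      (length gp * (2 * length OUT + 4)) (cfg0 41 (rev (concat (replicate d [2,2]))) (1 # 1 # OUT @ replicate z' 0))"
    using run_compact[OF assms, of d 0] by blast
  then have r1: "reach learner (cfg0 36 (rev gp @ sE # rev (d_syms d)) OUT)
      (length gp * (2 * length OUT + 4)) (cfg0 41 (rev (concat (replicate d [2,2]))) (1 # 1 # OUT @ replicate z' 0))"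
    by (simp add: cfg0_right_blank)
  have r2: "reach learner (cfg0 41 (rev (concat (replicate d [2,2]))) (1 # 1 # OUT @ replicate z' 0)) (2 * d + 2)
     (cfg0 42 [] (str_syms (replicate d True) @ OUT))"
    using run_rewind[of d "1 # OUT @ replicate z' 0"] cfg0_right_blanks[of 42 "[]" "str_syms (replicate d True) @ OUT" z']
    by (simp add: str_syms_def pair_syms_replicate_True)
  show ?thesis using reach_trans[OF r1 r2] .
qed

lemma run_preprocess:
  assumes S: "\<forall>s\<in>set S. T \<le> length s"
    and N: "3 * (length (header_syms d T 0) + length (concat (map str_syms S)) + length (concat (map (\<lambda>s. pairs_code_syms s (length s) T) S)) + 1) + 8 \<le> N"
  shows "reach learner (tm_init (enc_learn d T S)) ((length S + 2) * (T + 1) * (3 * (N + 5) * (N + 5)))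
     (cfg0 42 [] (str_syms (replicate d True) @ concat (map (\<lambda>s. pairs_code_syms s (length s) T) S)))"
proof -
  define Ss where "Ss = concat (map str_syms S)"
  define OUT where "OUT = concat (map (\<lambda>s. pairs_code_syms s (length s) T) S)"
  define gp where "gp = concat (replicate T [sU, sDn]) @ replicate (Suc (Suc (length Ss))) sDn @ [sHs]"
  have OS: "set OUT \<subseteq> {1,2}" unfolding OUT_def using set_pairs_code_syms by fastforce
  have gpS: "set gp \<subseteq> {sU, sDn, sHs}" unfolding gp_def using set_concat_replicate[of T "[sU, sDn]"] by auto
  have "reach learner (tm_init (enc_learn d T S)) (2 * d + 2 * T + 2 * length Ss + 7)
      (cfg0 9 (rev (header_syms d T 0)) (Ss @ [sHs]))"
    unfolding Ss_def by (rule run_read_header)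
  also have "reach learner (cfg0 9 (rev (header_syms d T 0)) (Ss @ sHs # [])) (length S * ((T + 1) * (3 * (N + 5) * (N + 5))))
     (cfg0 9 (rev (header_syms d T (0 + length Ss))) (sHs # [] @ OUT))"
    unfolding Ss_def OUT_def by (rule run_process_samples[OF S]) (use N in simp_all)
  also have "cfg0 9 (rev (header_syms d T (0 + length Ss))) (sHs # [] @ OUT)
      = cfg0 9 (rev (header_syms d T (length Ss))) (sHs # OUT)" by simp
  also have "reach learner (cfg0 9 (rev (header_syms d T (length Ss))) (sHs # OUT)) 1
      (cfg0 36 (sHs # rev (header_syms d T (length Ss))) OUT)"
    by (rule learner_step_Right[OF _ t9_Hs]) simp_all
  also have "cfg0 36 (sHs # rev (header_syms d T (length Ss))) OUT = cfg0 36 (rev gp @ sE # rev (d_syms d)) OUT"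
    unfolding gp_def header_syms_def by simp
  also have "reach learner (cfg0 36 (rev gp @ sE # rev (d_syms d)) OUT) (length gp * (2 * length OUT + 4) + (2 * d + 2))
     (cfg0 42 [] (str_syms (replicate d True) @ OUT))"
    by (rule run_compact_and_rewind[OF gpS _ OS]) (simp add: gp_def)
  finally have r: "reach learner (tm_init (enc_learn d T S))
    (2 * d + 2 * T + 2 * length Ss + 7 + length S * ((T + 1) * (3 * (N + 5) * (N + 5))) + 1
     + (length gp * (2 * length OUT + 4) + (2 * d + 2))) (cfg0 42 [] (str_syms (replicate d True) @ OUT))" .
  have lens: "length (header_syms d T 0) = 2 * d + 2 * T + 4" "length gp = 2 * T + length Ss + 3"
    unfolding gp_def by (simp_all add: length_header_syms d_syms_def length_concat sum_list_replicate)
  have Nl: "2 * d + 2 * T + length Ss + length OUT + 5 \<le> N" "length gp \<le> N" "length OUT \<le> N"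
    using N lens unfolding Ss_def OUT_def by simp_all
  have "length gp * (2 * length OUT + 4) \<le> N * (2 * N + 4)"
    using Nl by (intro mult_mono) auto
  then have "2 * d + 2 * T + 2 * length Ss + 7 + 1 + (length gp * (2 * length OUT + 4) + (2 * d + 2))
      \<le> 2 * (3 * (N + 5) * (N + 5))" using Nl by (simp add: algebra_simps)
  also have "\<dots> \<le> 2 * (T + 1) * (3 * (N + 5) * (N + 5))" by simp
  finally show ?thesis using r unfolding OUT_def by (elim reach_mono) (simp add: algebra_simps)
qed

section \<open>Simulating the consistency machine\<close>

definition lift_cfg :: "config \<Rightarrow> config" where "lift_cfg c = (case c of (q, tp, p) \<Rightarrow> (lift_state q, tp, p))"
definition oracle_cfg :: "config \<Rightarrow> bool" where "oracle_cfg c = (case c of (q, tp, p) \<Rightarrow> q < QM \<and> (\<forall>i. tp i < SM))"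

lemma oracle_delta_wf: "\<forall>q<QM. \<forall>s<SM. case dM q s of (q', s', _) \<Rightarrow> q' < QM \<and> s' < SM"
  using oracle_wf unfolding tm_wf_def by simp

lemma lift_cfg_step: assumes "oracle_cfg c"
  shows "tm_step learner (lift_cfg c) = lift_cfg (tm_step (QM, SM, dM) c) \<and> oracle_cfg (tm_step (QM, SM, dM) c)"
proof -
  obtain q tp p where c: "c = (q, tp, p)" by (cases c) auto
  have q: "q < QM" and tp: "\<forall>i. tp i < SM" using assms c by (auto simp: oracle_cfg_def)
  show ?thesis
  proof (cases "q = 1")
    case True
    then show ?thesis using assms unfolding c lift_cfg_def tm_step_def lift_state_def by simp
  next
    case False
    obtain q' s' mv where e: "dM q (tp p) = (q', s', mv)" by (cases "dM q (tp p)") auto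
    have tpp: "tp p < SM" using tp by simp
    have "case dM q (tp p) of (q', s', _) \<Rightarrow> q' < QM \<and> s' < SM" by (rule oracle_delta_wf[rule_format, OF q tpp])
    then have b: "q' < QM" "s' < SM" using e by auto
    have "learner_delta (42 + q) (tp p) = (lift_state q', s', mv)" using q tpp e unfolding learner_delta_def by simp
    moreover have "lift_state q \<noteq> 1" "lift_state q = 42 + q" using False by (auto simp: lift_state_def)
    ultimately show ?thesis using False b tp q e unfolding c lift_cfg_def tm_step_def oracle_cfg_def by auto
  qed
qed

lemma lift_cfg_run: "oracle_cfg c \<Longrightarrow> (tm_step learner ^^ n) (lift_cfg c) = lift_cfg ((tm_step (QM, SM, dM) ^^ n) c) \<and> oracle_cfg ((tm_step (QM, SM, dM) ^^ n) c)"
proof (induction n arbitrary: c)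
  case (Suc n)
  have s: "tm_step learner (lift_cfg c) = lift_cfg (tm_step (QM, SM, dM) c)" "oracle_cfg (tm_step (QM, SM, dM) c)"
    using lift_cfg_step[OF Suc.prems] by auto
  have e1: "(tm_step learner ^^ Suc n) (lift_cfg c) = (tm_step learner ^^ n) (tm_step learner (lift_cfg c))"
    by (simp only: funpow_Suc_right o_apply)
  have e2: "(tm_step (QM, SM, dM) ^^ Suc n) c = (tm_step (QM, SM, dM) ^^ n) (tm_step (QM, SM, dM) c)"
    by (simp only: funpow_Suc_right o_apply)
  show ?case unfolding e1 e2 s(1) by (rule Suc.IH[OF s(2)])
qed simp

lemma oracle_cfg_init: "oracle_cfg (tm_init x)"
  using two_le_QM three_le_SM unfolding oracle_cfg_def tm_init_def sym_of_bit_def by auto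

lemma lift_cfg_init: "lift_cfg (tm_init x) = cfg0 42 [] (map sym_of_bit x)"
  unfolding tm_init_eq_cfg0 lift_cfg_def cfg0_def cfg_def lift_state_def by simp

primrec cot_pairs :: "bool list \<Rightarrow> nat \<Rightarrow> nat \<Rightarrow> (bool list \<times> bool) list" where
  "cot_pairs s k 0 = []"
| "cot_pairs s k (Suc u) = (take (k - 1) s, s ! (k - 1)) # cot_pairs s (k - 1) u"

definition sample_pairs :: "nat \<Rightarrow> bool list list \<Rightarrow> (bool list \<times> bool) list" where
  "sample_pairs T S = concat (map (\<lambda>s. cot_pairs s (length s) T) S)"

lemma map_sym_cot_pairs: "map sym_of_bit (concat (map (\<lambda>(u, v). enc_str u @ enc_str [v]) (cot_pairs s k u))) = pairs_code_syms s k u"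
  by (induction u arbitrary: k) (auto simp: map_sym_enc_str pair_code_syms_def)

lemma map_sym_enc_cons: "map sym_of_bit (enc_cons d (sample_pairs T S)) = str_syms (replicate d True) @ concat (map (\<lambda>s. pairs_code_syms s (length s) T) S)"
proof -
  have "map sym_of_bit (concat (map (\<lambda>(u, v). enc_str u @ enc_str [v]) (sample_pairs T S))) = concat (map (\<lambda>s. pairs_code_syms s (length s) T) S)"
    unfolding sample_pairs_def by (induction S) (simp_all add: map_sym_cot_pairs[symmetric])
  then show ?thesis by (simp add: enc_cons_def enc_nat_def map_sym_enc_str)
qed

lemma learner_run_eq_oracle_run:
  assumes S: "\<forall>s\<in>set S. T \<le> length s"
    and N: "3 * (length (header_syms d T 0) + length (concat (map str_syms S)) + length (concat (map (\<lambda>s. pairs_code_syms s (length s) T) S)) + 1) + 8 \<le> N"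
    and H: "tm_halts_within (QM, SM, dM) tM (enc_cons d (sample_pairs T S))"
    and t: "(length S + 2) * (T + 1) * (3 * (N + 5) * (N + 5)) + tM \<le> t"
  shows "tm_halts_within learner t (enc_learn d T S) \<and>
         tm_output learner t (enc_learn d T S) = tm_output (QM, SM, dM) tM (enc_cons d (sample_pairs T S))"
proof -
  let ?C = "enc_cons d (sample_pairs T S)"
  obtain t0 where t0: "t0 \<le> (length S + 2) * (T + 1) * (3 * (N + 5) * (N + 5))"
    "(tm_step learner ^^ t0) (tm_init (enc_learn d T S)) = lift_cfg (tm_init ?C)"
    using run_preprocess[OF S N] unfolding reach_def lift_cfg_init map_sym_enc_cons by blast
  have r1: "(tm_step learner ^^ (tM + t0)) (tm_init (enc_learn d T S)) = lift_cfg (tm_run (QM, SM, dM) tM ?C)"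
    using t0(2) lift_cfg_run[OF oracle_cfg_init, of tM ?C] unfolding tm_run_def by (simp add: funpow_add)
  have h: "fst (lift_cfg (tm_run (QM, SM, dM) tM ?C)) = 1"
    using H unfolding tm_halts_within_def lift_cfg_def lift_state_def by (auto split: prod.splits)
  have "(tm_step learner ^^ t) (tm_init (enc_learn d T S)) = (tm_step learner ^^ (t - (tM + t0))) ((tm_step learner ^^ (tM + t0)) (tm_init (enc_learn d T S)))"
  proof -
    have "t = (t - (tM + t0)) + (tM + t0)" using t t0(1) by simp
    then show ?thesis by (metis funpow_add o_apply)
  qed
  also have "\<dots> = lift_cfg (tm_run (QM, SM, dM) tM ?C)" unfolding r1 by (rule funpow_tm_step_halted[OF h])
  finally have r: "tm_run learner t (enc_learn d T S) = lift_cfg (tm_run (QM, SM, dM) tM ?C)"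
    unfolding tm_run_def .
  show ?thesis using h unfolding tm_halts_within_def tm_output_def r
    by (auto simp: lift_cfg_def split: prod.splits)
qed

lemma set_cot_pairs: "(a, b) \<in> set (cot_pairs s k u) \<longleftrightarrow> (\<exists>i<u. a = take (k - Suc i) s \<and> b = s ! (k - Suc i))"
proof (induction u arbitrary: k)
  case 0 then show ?case by simp
next
  case (Suc u)
  show ?case
  proof
    assume "(a, b) \<in> set (cot_pairs s k (Suc u))"
    then consider "a = take (k - 1) s \<and> b = s ! (k - 1)" | "(a, b) \<in> set (cot_pairs s (k - 1) u)" by auto
    then show "\<exists>i<Suc u. a = take (k - Suc i) s \<and> b = s ! (k - Suc i)"
    proof cases
      case 1 then show ?thesis by (intro exI[of _ 0]) (simp add: One_nat_def)
    next
      case 2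
      then obtain i where "i < u" "a = take (k - 1 - Suc i) s \<and> b = s ! (k - 1 - Suc i)" using Suc.IH by blast
      then show ?thesis by (intro exI[of _ "Suc i"]) (simp add: One_nat_def)
    qed
  next
    assume "\<exists>i<Suc u. a = take (k - Suc i) s \<and> b = s ! (k - Suc i)"
    then obtain i where i: "i < Suc u" "a = take (k - Suc i) s" "b = s ! (k - Suc i)" by blast
    show "(a, b) \<in> set (cot_pairs s k (Suc u))"
    proof (cases i)
      case 0 then show ?thesis using i by (simp add: One_nat_def)
    next
      case (Suc i')
      have e: "k - 1 - Suc i' = k - Suc i" using Suc by arith
      have "\<exists>i<u. a = take (k - 1 - Suc i) s \<and> b = s ! (k - 1 - Suc i)"
        using i Suc e by (intro exI[of _ i']) simp
      then have "(a, b) \<in> set (cot_pairs s (k - 1) u)" using Suc.IH by blast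
      then show ?thesis by simp
    qed
  qed
qed

lemma set_cot_pairs_cot: "(a, b) \<in> set (cot_pairs (cot f T x) (length (cot f T x)) T) \<longleftrightarrow> (\<exists>j<T. a = cot f j x \<and> b = f (cot f j x))"
proof -
  have "(\<exists>i<T. a = take (length x + T - Suc i) (cot f T x) \<and> b = cot f T x ! (length x + T - Suc i))
      \<longleftrightarrow> (\<exists>j<T. a = cot f j x \<and> b = f (cot f j x))"
  proof
    assume "\<exists>i<T. a = take (length x + T - Suc i) (cot f T x) \<and> b = cot f T x ! (length x + T - Suc i)"
    then obtain i where i: "i < T" "a = take (length x + T - Suc i) (cot f T x)" "b = cot f T x ! (length x + T - Suc i)" by blast
    define j where "j = T - Suc i"
    have j: "j < T" "length x + T - Suc i = length x + j" using i(1) unfolding j_def by auto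
    show "\<exists>j<T. a = cot f j x \<and> b = f (cot f j x)"
      using i j take_cot[of j T x f] nth_cot[of j T f x] by (intro exI[of _ j]) simp
  next
    assume "\<exists>j<T. a = cot f j x \<and> b = f (cot f j x)"
    then obtain j where j: "j < T" "a = cot f j x" "b = f (cot f j x)" by blast
    define i where "i = T - Suc j"
    have i: "i < T" "length x + T - Suc i = length x + j" using j(1) unfolding i_def by auto
    show "\<exists>i<T. a = take (length x + T - Suc i) (cot f T x) \<and> b = cot f T x ! (length x + T - Suc i)"
      using i j take_cot[of j T x f] nth_cot[of j T f x] by (intro exI[of _ i]) simp
  qed
  then show ?thesis using set_cot_pairs by simp
qed

lemma set_sample_pairs: "p \<in> set (sample_pairs T (map (cot f T) xs)) \<longleftrightarrow> (\<exists>x\<in>set xs. \<exists>j<T. p = (cot f j x, f (cot f j x)))"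
  unfolding sample_pairs_def using set_cot_pairs_cot by (cases p) auto

lemma consistent_sample_pairs: "\<forall>(a, b)\<in>set (sample_pairs T (map (cot f T) xs)). f a = b"
  using set_sample_pairs by fastforce

lemma e2e_eq_if_consistent_sample_pairs:
  assumes "\<forall>(a, b)\<in>set (sample_pairs T (map (cot f T) xs)). h a = b" "x \<in> set xs"
  shows "e2e h T x = e2e f T x"
proof -
  have hj: "h (cot f j x) = f (cot f j x)" if "j < T" for j
    using assms set_sample_pairs[of "(cot f j x, f (cot f j x))" T f xs] that by fastforce
  then show ?thesis unfolding e2e_def using cot_eq_if_agrees_on_steps[of T h f x] by simp
qed

lemma length_pair_code_syms_le: "length (pair_code_syms s k) \<le> 2 * length s + 6"
  by (simp add: pair_code_syms_def)

lemma length_pairs_code_syms_le: "length (pairs_code_syms s k u) \<le> u * (2 * length s + 6)"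
proof (induction u arbitrary: k)
  case (Suc u)
  have "length (pairs_code_syms s k (Suc u)) = length (pair_code_syms s (k - 1)) + length (pairs_code_syms s (k - 1) u)" by simp
  also have "\<dots> \<le> (2 * length s + 6) + u * (2 * length s + 6)" using length_pair_code_syms_le Suc.IH add_mono by blast
  finally show ?case by simp
qed simp

lemma length_bounds:
  assumes "\<forall>s\<in>set S. length s \<le> n + T"
  shows "3 * (length (header_syms d T 0) + length (concat (map str_syms S)) + length (concat (map (\<lambda>s. pairs_code_syms s (length s) T) S)) + 1) + 8
         \<le> 3 * (2 * d + 2 * T + 5 + length S * (T + 1) * (2 * (n + T) + 6)) + 8"
    and "length (enc_cons d (sample_pairs T S)) \<le> 3 * (2 * d + 2 * T + 5 + length S * (T + 1) * (2 * (n + T) + 6)) + 8"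
proof -
  have a: "length (concat (map str_syms S)) \<le> length S * (2 * (n + T) + 2)"
    by (rule length_concat_map_le) (use assms in auto)
  have b: "length (concat (map (\<lambda>s. pairs_code_syms s (length s) T) S)) \<le> length S * (T * (2 * (n + T) + 6))"
  proof (rule length_concat_map_le, intro ballI)
    fix s assume "s \<in> set S"
    then have "length (pairs_code_syms s (length s) T) \<le> T * (2 * length s + 6)" using length_pairs_code_syms_le by blast
    also have "\<dots> \<le> T * (2 * (n + T) + 6)" using assms \<open>s \<in> set S\<close> by (intro mult_left_mono) auto
    finally show "length (pairs_code_syms s (length s) T) \<le> T * (2 * (n + T) + 6)" .
  qed
  have c: "length (header_syms d T 0) = 2 * d + 2 * T + 4" by (simp add: length_header_syms d_syms_def length_concat sum_list_replicate)
  have "length S * (2 * (n + T) + 2) + length S * (T * (2 * (n + T) + 6)) \<le> length S * (T + 1) * (2 * (n + T) + 6)"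
    by (simp add: algebra_simps)
  then show "3 * (length (header_syms d T 0) + length (concat (map str_syms S)) + length (concat (map (\<lambda>s. pairs_code_syms s (length s) T) S)) + 1) + 8
         \<le> 3 * (2 * d + 2 * T + 5 + length S * (T + 1) * (2 * (n + T) + 6)) + 8" using a b c by simp
  have "length (enc_cons d (sample_pairs T S)) = length (map sym_of_bit (enc_cons d (sample_pairs T S)))" by simp
  also have "\<dots> = 2 * d + 2 + length (concat (map (\<lambda>s. pairs_code_syms s (length s) T) S))"
    unfolding map_sym_enc_cons by simp
  finally show "length (enc_cons d (sample_pairs T S)) \<le> 3 * (2 * d + 2 * T + 5 + length S * (T + 1) * (2 * (n + T) + 6)) + 8"
    using b \<open>length S * (2 * (n + T) + 2) + length S * (T * (2 * (n + T) + 6)) \<le> length S * (T + 1) * (2 * (n + T) + 6)\<close>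
    by simp
qed

lemma learner_output_consistent:
  assumes cons_M: "solves_cons_within F rep (QM, SM, dM) cM kM"
    and f: "f \<in> F d" and xs: "\<forall>x\<in>set xs. length x \<le> n"
    and t: "learner_time cM kM n d T (length xs) \<le> t"
  shows "tm_halts_within learner t (enc_learn d T (map (cot f T) xs)) \<and>
         rep d (tm_output learner t (enc_learn d T (map (cot f T) xs))) \<in> F d \<and>
         (\<forall>x\<in>set xs. e2e (rep d (tm_output learner t (enc_learn d T (map (cot f T) xs)))) T x = e2e f T x)"
proof -
  define S where "S = map (cot f T) xs"
  define ps where "ps = sample_pairs T S"
  define inp where "inp = enc_cons d ps"
  define tM where "tM = cM * (length inp + d + 1) ^ kM"
  define r where "r = tm_output (QM, SM, dM) tM inp"
  define N where "N = input_size_bound n d T (length xs)"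
  have "\<exists>f\<in>F d. \<forall>(u, v)\<in>set ps. f u = v"
    using f consistent_sample_pairs[of T f xs] unfolding ps_def S_def by blast
  then have M: "tm_halts_within (QM, SM, dM) tM inp" "rep d r \<in> F d" "\<forall>(u, v)\<in>set ps. rep d r u = v"
    using cons_M unfolding solves_cons_within_def inp_def tM_def r_def Let_def by simp_all
  have Sl: "\<forall>s\<in>set S. length s \<le> n + T" "\<forall>s\<in>set S. T \<le> length s" using xs unfolding S_def by auto
  have lS: "length S = length xs" unfolding S_def by simp
  have Nb: "3 * (length (header_syms d T 0) + length (concat (map str_syms S))
      + length (concat (map (\<lambda>s. pairs_code_syms s (length s) T) S)) + 1) + 8 \<le> N"
    using length_bounds(1)[OF Sl(1), of d] unfolding N_def input_size_bound_def lS .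
  have "length inp \<le> N"
    using length_bounds(2)[OF Sl(1), of d] unfolding N_def input_size_bound_def lS inp_def ps_def .
  then have "tM \<le> cM * (N + d + 1) ^ kM" unfolding tM_def by (intro mult_left_mono power_mono) auto
  then have tt: "(length S + 2) * (T + 1) * (3 * (N + 5) * (N + 5)) + tM \<le> t"
    using t lS unfolding learner_time_def N_def Let_def by simp
  have main: "tm_halts_within learner t (enc_learn d T S) \<and> tm_output learner t (enc_learn d T S) = r"
    using learner_run_eq_oracle_run[OF Sl(2) Nb M(1)[unfolded inp_def ps_def] tt]
    unfolding r_def inp_def ps_def by simp
  have "\<forall>x\<in>set xs. e2e (rep d r) T x = e2e f T x"
    using e2e_eq_if_consistent_sample_pairs[of T f xs "rep d r"] M(3) unfolding ps_def S_def by blast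
  then show ?thesis using main M(2) unfolding S_def by simp
qed

theorem cot_learnable_in_time_if_time_suffices:
  assumes cons_M: "solves_cons_within F rep (QM, SM, dM) cM kM"
    and VC: "\<And>d. vcdim (F d) \<le> enat (V d)"
    and time: "\<And>n d T \<epsilon> \<delta>. 0 < \<epsilon> \<Longrightarrow> \<epsilon> < 1 \<Longrightarrow> 0 < \<delta> \<Longrightarrow> \<delta> < 1 \<Longrightarrow>
                 learner_time cM kM n d T (sample_size (V d) n T \<epsilon> \<delta>) \<le> tb n d T \<epsilon> \<delta>"
  shows "cot_learnable_in_time F rep tb"
  unfolding cot_learnable_in_time_def Let_def
proof (intro exI[of _ learner] exI[of _ "\<lambda>n d T \<epsilon> \<delta>. sample_size (V d) n T \<epsilon> \<delta>"]
    conjI allI impI ballI learner_wf)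
  fix n d T :: nat and \<epsilon> \<delta> :: real and f and xs :: "bool list list"
  assume "0 < \<epsilon> \<and> \<epsilon> < 1 \<and> 0 < \<delta> \<and> \<delta> < 1" "f \<in> F d"
    "length xs = sample_size (V d) n T \<epsilon> \<delta> \<and> (\<forall>x\<in>set xs. length x \<le> n)"
  then show "tm_halts_within learner (tb n d T \<epsilon> \<delta>) (enc_learn d T (map (cot f T) xs))"
    using learner_output_consistent[OF cons_M, of f d xs n T "tb n d T \<epsilon> \<delta>"] time[of \<epsilon> \<delta> n d T] by auto
next
  fix n d T :: nat and \<epsilon> \<delta> :: real and D :: "bool list pmf" and f
  assume rng: "0 < \<epsilon> \<and> \<epsilon> < 1 \<and> 0 < \<delta> \<and> \<delta> < 1" and f: "f \<in> F d"
    and supp: "set_pmf D \<subseteq> {x. length x \<le> n}"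
  show "1 - \<delta> \<le> measure_pmf.prob (iid_pmf D (sample_size (V d) n T \<epsilon> \<delta>))
          {xs. measure_pmf.prob D {x. e2e (rep d (tm_output learner (tb n d T \<epsilon> \<delta>)
                 (enc_learn d T (map (cot f T) xs)))) T x \<noteq> e2e f T x} \<le> \<epsilon>}"
  proof (rule consistent_e2e_learner_pac[OF card_le_if_vcdim_le[OF VC] supp _ _ sample_size_ge])
    fix xs :: "bool list list" assume "length xs = sample_size (V d) n T \<epsilon> \<delta>" "set xs \<subseteq> set_pmf D"
    then show "rep d (tm_output learner (tb n d T \<epsilon> \<delta>) (enc_learn d T (map (cot f T) xs))) \<in> F d \<and>
        (\<forall>x\<in>set xs. e2e (rep d (tm_output learner (tb n d T \<epsilon> \<delta>) (enc_learn d T (map (cot f T) xs)))) T x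
                     = e2e f T x)"
      using learner_output_consistent[OF cons_M f, of xs n T "tb n d T \<epsilon> \<delta>"] time[of \<epsilon> \<delta> n d T] rng supp
      by auto
  qed (use rng in auto)
qed
end

section \<open>Polynomial time bound\<close>

lemma le_power_one: "a \<le> (z::real) \<Longrightarrow> a \<le> z ^ 1"
  by simp

lemma le_power_mult: "0 \<le> a \<Longrightarrow> 0 \<le> b \<Longrightarrow> a \<le> (z::real) ^ e1 \<Longrightarrow> b \<le> z ^ e2 \<Longrightarrow> a * b \<le> z ^ (e1 + e2)"
  by (simp add: mult_mono power_add)

lemma le_power_mono: "1 \<le> (z::real) \<Longrightarrow> a \<le> z ^ e \<Longrightarrow> e \<le> e' \<Longrightarrow> a \<le> z ^ e'"
  by (meson order_trans power_increasing)

lemma le_power_add: "2 \<le> (z::real) \<Longrightarrow> a \<le> z ^ e \<Longrightarrow> b \<le> z ^ e \<Longrightarrow> a + b \<le> z ^ Suc e"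
proof -
  assume "2 \<le> z" "a \<le> z ^ e" "b \<le> z ^ e"
  then have "a + b \<le> 2 * z ^ e" by simp
  also have "\<dots> \<le> z * z ^ e" using \<open>2 \<le> z\<close> by (intro mult_right_mono) auto
  finally show ?thesis by simp
qed

lemma le_power_pow: "0 \<le> a \<Longrightarrow> a \<le> (z::real) ^ e \<Longrightarrow> a ^ k \<le> z ^ (e * k)"
  by (metis power_mono power_mult)

text \<open>Every quantity below is bounded by a power of \<open>pbase\<close>; the factor \<open>B\<close> absorbs the
  constants of the consistency machine and of the VC bound.\<close>

context
  fixes n d T :: nat and \<epsilon> \<delta> B :: real
  assumes eps: "0 < \<epsilon>" "\<epsilon> < 1" and del: "0 < \<delta>" "\<delta> < 1" and B: "1000 \<le> B"
begin

abbreviation "pbase \<equiv> B * (real n + real d + real T + 1 / \<epsilon> + ln (1 / \<delta>) + 1)"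

lemma parameters_le_pbase:
  "real n + real T + 1 \<le> pbase" "real d + 1 \<le> pbase" "real T + 1 \<le> pbase" "1 / \<epsilon> \<le> pbase" "ln (1 / \<delta>) \<le> pbase"
    "real n + real d + real T + 1 \<le> pbase" "B \<le> pbase" "1000 \<le> pbase"
proof -
  let ?X = "real n + real d + real T + 1 / \<epsilon> + ln (1 / \<delta>) + 1"
  have "1 < 1 / \<epsilon>" "0 < ln (1 / \<delta>)" using eps del by simp_all
  then have X: "1 \<le> ?X" "real n + real T + 1 \<le> ?X" "real d + 1 \<le> ?X" "real T + 1 \<le> ?X" "1 / \<epsilon> \<le> ?X"
    "ln (1 / \<delta>) \<le> ?X" "real n + real d + real T + 1 \<le> ?X" by simp_all
  have "?X \<le> pbase" using B X(1) by (simp add: mult_le_cancel_right1)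
  then show "real n + real T + 1 \<le> pbase" "real d + 1 \<le> pbase" "real T + 1 \<le> pbase" "1 / \<epsilon> \<le> pbase" "ln (1 / \<delta>) \<le> pbase"
    "real n + real d + real T + 1 \<le> pbase" using X by linarith+
  show "B \<le> pbase" using B X(1) by (simp add: mult_le_cancel_left1)
  then show "1000 \<le> pbase" using B by linarith
qed

lemma pbase_ge: "2 \<le> pbase" "1 \<le> pbase" "0 \<le> pbase"
  using parameters_le_pbase(8) by simp_all

lemma const_le_pbase_power: "a \<le> 1000 \<Longrightarrow> 1 \<le> e \<Longrightarrow> a \<le> pbase ^ e"
  using le_power_mono[OF pbase_ge(2) le_power_one[of a]] parameters_le_pbase(8) by simp

lemma sample_size_le_pbase_power:
  assumes "real c \<le> B"
  shows "real (sample_size (c * (d + 1) ^ k) n T \<epsilon> \<delta>) \<le> pbase ^ (k + 5)"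
proof -
  define q where "q = (real ((n + T) * (c * (d + 1) ^ k)) + ln (1 / \<delta>)) / \<epsilon>"
  have V: "real (c * (d + 1) ^ k) \<le> pbase ^ (1 + k)"
  proof -
    have dk: "(real d + 1) ^ k \<le> pbase ^ (1 * k)" by (rule le_power_pow) (use parameters_le_pbase in auto)
    have "real c * (real d + 1) ^ k \<le> pbase ^ (1 + 1 * k)"
      by (rule le_power_mult[OF _ _ le_power_one dk]) (use assms parameters_le_pbase(7) in simp_all)
    then show ?thesis by simp
  qed
  have "real ((n + T) * (c * (d + 1) ^ k)) \<le> pbase ^ (1 + (1 + k))"
    using le_power_mult[OF _ _ le_power_one V] parameters_le_pbase(1) by simp
  moreover have "ln (1 / \<delta>) \<le> pbase ^ (1 + (1 + k))"
    by (rule le_power_mono[OF pbase_ge(2) le_power_one]) (use parameters_le_pbase in auto)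
  ultimately have q3: "real ((n + T) * (c * (d + 1) ^ k)) + ln (1 / \<delta>) \<le> pbase ^ Suc (1 + (1 + k))"
    by (rule le_power_add[OF pbase_ge(1)])
  have "(real ((n + T) * (c * (d + 1) ^ k)) + ln (1 / \<delta>)) * (1 / \<epsilon>) \<le> pbase ^ (Suc (1 + (1 + k)) + 1)"
    by (rule le_power_mult[OF _ _ q3 le_power_one[OF parameters_le_pbase(4)]]) (use eps del in simp_all)
  then have q: "q \<le> pbase ^ (Suc (1 + (1 + k)) + 1)" unfolding q_def by simp
  have "k + 5 = Suc (Suc (1 + (1 + k)) + 1)" by simp
  then have "q + 1 \<le> pbase ^ (k + 5)"
    by (simp only:) (rule le_power_add[OF pbase_ge(1) q const_le_pbase_power], simp_all)
  moreover have "0 \<le> q" unfolding q_def using eps del by simp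
  then have "real (sample_size (c * (d + 1) ^ k) n T \<epsilon> \<delta>) \<le> q + 1"
    unfolding sample_size_def q_def by linarith
  ultimately show ?thesis by linarith
qed

lemma input_size_bound_le_pbase_power:
  assumes m: "real m \<le> pbase ^ e"
  shows "real (input_size_bound n d T m) \<le> pbase ^ (e + 6)"
proof -
  have a1: "real (2 * d + 2 * T + 5) \<le> pbase ^ 2"
  proof -
    have "real (2 * d + 2 * T + 5) \<le> 5 * pbase" using parameters_le_pbase by simp
    also have "\<dots> \<le> pbase * pbase" by (rule mult_right_mono) (use parameters_le_pbase in auto)
    finally show ?thesis by (simp add: power2_eq_square)
  qed
  have a3: "real (2 * (n + T) + 6) \<le> pbase ^ 2"
  proof -
    have "real (2 * (n + T) + 6) \<le> 6 * pbase" using parameters_le_pbase by simp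
    also have "\<dots> \<le> pbase * pbase" by (rule mult_right_mono) (use parameters_le_pbase in auto)
    finally show ?thesis by (simp add: power2_eq_square)
  qed
  have "real m * real (T + 1) * real (2 * (n + T) + 6) \<le> pbase ^ (e + 1 + 2)"
    by (rule le_power_mult[OF _ _ le_power_mult[OF _ _ m le_power_one] a3])
      (use parameters_le_pbase in simp_all)
  then have a4: "real (m * (T + 1) * (2 * (n + T) + 6)) \<le> pbase ^ (e + 1 + 2)"
    by (simp only: of_nat_mult)
  have "real (2 * d + 2 * T + 5) \<le> pbase ^ (e + 1 + 2)"
    by (rule le_power_mono[OF pbase_ge(2) a1]) simp
  then have a5: "real (2 * d + 2 * T + 5) + real (m * (T + 1) * (2 * (n + T) + 6)) \<le> pbase ^ Suc (e + 1 + 2)"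
    by (rule le_power_add[OF pbase_ge(1) _ a4])
  have a6: "3 * (real (2 * d + 2 * T + 5) + real (m * (T + 1) * (2 * (n + T) + 6))) \<le> pbase ^ (1 + Suc (e + 1 + 2))"
    by (rule le_power_mult[OF _ _ const_le_pbase_power[of 3 1] a5]) simp_all
  have "3 * (real (2 * d + 2 * T + 5) + real (m * (T + 1) * (2 * (n + T) + 6))) + 8 \<le> pbase ^ Suc (1 + Suc (e + 1 + 2))"
    by (rule le_power_add[OF pbase_ge(1) a6 const_le_pbase_power]) simp_all
  moreover have "real (input_size_bound n d T m)
      = 3 * (real (2 * d + 2 * T + 5) + real (m * (T + 1) * (2 * (n + T) + 6))) + 8"
    unfolding input_size_bound_def by simp
  moreover have "Suc (1 + Suc (e + 1 + 2)) = e + 6" by simp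
  ultimately show ?thesis by (simp only:)
qed

lemma preprocessing_time_le_pbase_power:
  assumes m: "real m \<le> pbase ^ e" "1 \<le> e"
  defines "N \<equiv> input_size_bound n d T m"
  shows "real ((m + 2) * (T + 1) * (3 * (N + 5) * (N + 5))) \<le> pbase ^ (3 * e + 17)"
proof -
  have "real N + 5 \<le> pbase ^ Suc (e + 6)"
    unfolding N_def by (rule le_power_add[OF pbase_ge(1) input_size_bound_le_pbase_power[OF m(1)] const_le_pbase_power]) simp_all
  then have N5: "real (N + 5) \<le> pbase ^ Suc (e + 6)" by simp
  have "real m + 2 \<le> pbase ^ Suc e" by (rule le_power_add[OF pbase_ge(1) m(1) const_le_pbase_power]) (use m in simp_all)
  then have m2: "real (m + 2) \<le> pbase ^ Suc e" by simp
  have b0: "3 * real (N + 5) \<le> pbase ^ (1 + Suc (e + 6))"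
    by (rule le_power_mult[OF _ _ const_le_pbase_power[of 3 1] N5]) simp_all
  have b1: "3 * real (N + 5) * real (N + 5) \<le> pbase ^ (1 + Suc (e + 6) + Suc (e + 6))"
    by (rule le_power_mult[OF _ _ b0 N5]) simp_all
  have b2: "real (m + 2) * real (T + 1) \<le> pbase ^ (Suc e + 1)"
    by (rule le_power_mult[OF _ _ m2 le_power_one]) (use parameters_le_pbase(3) in simp_all)
  have "real (m + 2) * real (T + 1) * (3 * real (N + 5) * real (N + 5))
      \<le> pbase ^ (Suc e + 1 + (1 + Suc (e + 6) + Suc (e + 6)))"
    by (rule le_power_mult[OF _ _ b2 b1]) simp_all
  then have "real (m + 2) * real (T + 1) * (3 * real (N + 5) * real (N + 5)) \<le> pbase ^ (3 * e + 17)"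
    by (rule le_power_mono[OF pbase_ge(2)]) simp
  then show ?thesis by (simp only: of_nat_mult of_nat_numeral)
qed

lemma cons_time_le_pbase_power:
  assumes m: "real m \<le> pbase ^ e" and c: "real c \<le> B"
  defines "N \<equiv> input_size_bound n d T m"
  shows "real (c * (N + d + 1) ^ k) \<le> pbase ^ (1 + (e + 7) * k)"
proof -
  have "real N + real (d + 1) \<le> pbase ^ Suc (e + 6)"
  proof (rule le_power_add[OF pbase_ge(1)])
    show "real N \<le> pbase ^ (e + 6)" unfolding N_def by (rule input_size_bound_le_pbase_power[OF m])
    show "real (d + 1) \<le> pbase ^ (e + 6)"
      by (rule le_power_mono[OF pbase_ge(2) le_power_one]) (use parameters_le_pbase(2) in simp_all)
  qed
  then have Ndk: "real (N + d + 1) ^ k \<le> pbase ^ (Suc (e + 6) * k)"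
    by (intro le_power_pow) simp_all
  have "real c * real (N + d + 1) ^ k \<le> pbase ^ (1 + Suc (e + 6) * k)"
    by (rule le_power_mult[OF _ _ le_power_one Ndk]) (use c parameters_le_pbase(7) in simp_all)
  then show ?thesis by (simp only: of_nat_mult of_nat_power) (simp add: algebra_simps)
qed

lemma learner_time_le_pbase_power:
  assumes m: "real m \<le> pbase ^ e" "1 \<le> e" and c: "real c \<le> B"
  shows "real (learner_time c k n d T m) \<le> pbase ^ (3 * e + 18 + (e + 7) * k)"
proof -
  define E where "E = 3 * e + 17 + (e + 7) * k"
  have "real ((m + 2) * (T + 1) * (3 * (input_size_bound n d T m + 5) * (input_size_bound n d T m + 5)))
        + real (c * (input_size_bound n d T m + d + 1) ^ k) \<le> pbase ^ Suc E"
  proof (rule le_power_add[OF pbase_ge(1)])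
    show "real ((m + 2) * (T + 1) * (3 * (input_size_bound n d T m + 5) * (input_size_bound n d T m + 5))) \<le> pbase ^ E"
      by (rule le_power_mono[OF pbase_ge(2) preprocessing_time_le_pbase_power[OF m]]) (simp add: E_def)
    show "real (c * (input_size_bound n d T m + d + 1) ^ k) \<le> pbase ^ E"
      by (rule le_power_mono[OF pbase_ge(2) cons_time_le_pbase_power[OF m(1) c]]) (simp add: E_def)
  qed
  moreover have "3 * e + 18 + (e + 7) * k = Suc E" by (simp add: E_def)
  ultimately show ?thesis unfolding learner_time_def Let_def by (simp only: of_nat_add)
qed

end

lemma learner_time_sample_size_le:
  fixes n d T cV kV cM kM :: nat and \<epsilon> \<delta> :: real
  assumes "0 < \<epsilon>" "\<epsilon> < 1" "0 < \<delta>" "\<delta> < 1"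
  defines "B \<equiv> real cV + real cM + 1000" and "K \<equiv> 3 * (kV + 5) + 18 + (kV + 12) * kM"
  shows "learner_time cM kM n d T (sample_size (cV * (d + 1) ^ kV) n T \<epsilon> \<delta>)
           \<le> nat \<lceil>B ^ K * (real n + real d + real T + 1 / \<epsilon> + ln (1 / \<delta>) + 1) ^ K\<rceil>"
proof -
  have "1000 \<le> B" "real cV \<le> B" "real cM \<le> B" unfolding B_def by simp_all
  have m: "real (sample_size (cV * (d + 1) ^ kV) n T \<epsilon> \<delta>)
      \<le> (B * (real n + real d + real T + 1 / \<epsilon> + ln (1 / \<delta>) + 1)) ^ (kV + 5)"
    by (rule sample_size_le_pbase_power[OF assms(1-4) \<open>1000 \<le> B\<close> \<open>real cV \<le> B\<close>])
  have "real (learner_time cM kM n d T (sample_size (cV * (d + 1) ^ kV) n T \<epsilon> \<delta>))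
      \<le> (B * (real n + real d + real T + 1 / \<epsilon> + ln (1 / \<delta>) + 1)) ^ (3 * (kV + 5) + 18 + (kV + 5 + 7) * kM)"
    by (rule learner_time_le_pbase_power[OF assms(1-4) \<open>1000 \<le> B\<close> m _ \<open>real cM \<le> B\<close>]) simp
  moreover have "3 * (kV + 5) + 18 + (kV + 5 + 7) * kM = K" unfolding K_def by simp
  ultimately show ?thesis by (simp add: power_mult_distrib le_nat_iff ceiling_le_iff le_ceiling_iff)
qed

theorem corollary3p8:
  fixes F :: "nat \<Rightarrow> (bool list \<Rightarrow> bool) set"
    and rep :: "nat \<Rightarrow> bool list \<Rightarrow> (bool list \<Rightarrow> bool)"
    and M :: tm
  assumes "cons_poly_time F rep M"
    and "\<exists>c k::nat. \<forall>d. vcdim (F d) \<le> enat (c * (d + 1) ^ k)"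
  shows "\<exists>(c::real) (k::nat). cot_learnable_in_time F rep
           (\<lambda>n d T \<epsilon> \<delta>. nat \<lceil>c * (real n + real d + real T + 1 / \<epsilon> + ln (1 / \<delta>) + 1) ^ k\<rceil>)"
proof -
  obtain QM SM dM where M: "M = (QM, SM, dM)" by (cases M)
  obtain cM kM where wf: "tm_wf M" and cons_M: "solves_cons_within F rep M cM kM"
    using assms(1) unfolding cons_poly_time_iff by blast
  obtain cV kV :: nat where VC: "\<And>d. vcdim (F d) \<le> enat (cV * (d + 1) ^ kV)"
    using assms(2) by blast
  interpret oracle_tm QM SM dM using wf unfolding M by unfold_locales
  have "cot_learnable_in_time F rep (\<lambda>n d T \<epsilon> \<delta>. nat \<lceil>(real cV + real cM + 1000) ^ (3 * (kV + 5) + 18 + (kV + 12) * kM)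
          * (real n + real d + real T + 1 / \<epsilon> + ln (1 / \<delta>) + 1) ^ (3 * (kV + 5) + 18 + (kV + 12) * kM)\<rceil>)"
    by (rule cot_learnable_in_time_if_time_suffices[OF cons_M[unfolded M] VC learner_time_sample_size_le])
  then show ?thesis by blast
qed

end
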